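(* There exists a left-total optimal machine, but no left-total machine can be effectively optimal.
   Context: A machine is a partial computable function from binary strings to binary strings; for a machine $V$ let $C_V(x)=\min\{|p|\colon V(p)=x\}$ (plain Kolmogorov complexity with respect to $V$). A machine $U$ is optimal if for every machine $V$ there is $c$ with $C_U(x)\le C_V(x)+c$ for all $x$. $U$ is effectively optimal if for every machine $V$ there is a total computable function $h$ with $|h(x)|\le|x|+c$ for some $c$ and all $x$, such that $V(x)=U(h(x))$ for all $x$ (both undefined or both defined and equal). A machine is left-total if for every $n$ the $n$-bit strings in its domain form an initial segment in the lexicographic ordering. *)

theory Defs
  imports "HOL-Library.Extended_Nat"
begin

datatype recf =
    Zero
  | Succ
  | Proj nat
  | Comp recf "recf list"
  | Prim recf recf
  | Mn recf

lemma list_all2_mono_pred [mono]: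
  "(\<And>x y. P x y \<longrightarrow> Q x y) \<Longrightarrow> list_all2 P xs ys \<longrightarrow> list_all2 Q xs ys"
  by (auto elim: list_all2_mono)

inductive eval :: "recf \<Rightarrow> nat list \<Rightarrow> nat \<Rightarrow> bool" where
  eval_Zero: "eval Zero xs 0"
| eval_Succ: "eval Succ (x # xs) (Suc x)"
| eval_Proj: "i < length xs \<Longrightarrow> eval (Proj i) xs (xs ! i)"
| eval_Comp: "list_all2 (\<lambda>g y. eval g xs y) gs ys \<Longrightarrow> eval f ys z \<Longrightarrow> eval (Comp f gs) xs z"
| eval_Prim0: "eval f xs y \<Longrightarrow> eval (Prim f g) (0 # xs) y"
| eval_PrimS: "eval (Prim f g) (n # xs) y \<Longrightarrow> eval g (y # n # xs) z
                 \<Longrightarrow> eval (Prim f g) (Suc n # xs) z"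
| eval_Mn: "eval f (n # xs) 0 \<Longrightarrow> (\<forall>m<n. \<exists>y. eval f (m # xs) y \<and> 0 < y)
                 \<Longrightarrow> eval (Mn f) xs n"

text \<open>Binary strings are bool lists (False = 0, True = 1). Bijective coding into nat:
  [] \<mapsto> 0, b # w \<mapsto> 2 * code w + 1 + (if b then 1 else 0).\<close>
fun bcode :: "bool list \<Rightarrow> nat" where
  "bcode [] = 0"
| "bcode (b # w) = 2 * bcode w + 1 + (if b then 1 else 0)"

definition machine :: "(bool list \<Rightarrow> bool list option) \<Rightarrow> bool" where
  "machine V \<longleftrightarrow> (\<exists>r. \<forall>x y. eval r [bcode x] y \<longleftrightarrow> (\<exists>z. V x = Some z \<and> y = bcode z))"

definition total_computable :: "(bool list \<Rightarrow> bool list) \<Rightarrow> bool" where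
  "total_computable h \<longleftrightarrow> machine (\<lambda>x. Some (h x))"

text \<open>Plain Kolmogorov complexity w.r.t. V (infinity if x is not in the range).\<close>
definition C :: "(bool list \<Rightarrow> bool list option) \<Rightarrow> bool list \<Rightarrow> enat" where
  "C V x = (INF p \<in> {p. V p = Some x}. enat (length p))"

definition optimal :: "(bool list \<Rightarrow> bool list option) \<Rightarrow> bool" where
  "optimal U \<longleftrightarrow> (\<forall>V. machine V \<longrightarrow> (\<exists>c::nat. \<forall>x. C U x \<le> C V x + enat c))"

definition effectively_optimal :: "(bool list \<Rightarrow> bool list option) \<Rightarrow> bool" where
  "effectively_optimal U \<longleftrightarrow>
     (\<forall>V. machine V \<longrightarrow>
        (\<exists>h c. total_computable h \<and> (\<forall>x. length (h x) \<le> length x + c)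
               \<and> (\<forall>x. V x = U (h x))))"

text \<open>Lexicographic order on binary strings, 0 < 1; for equal lengths this is the usual one.\<close>
definition lex_le :: "bool list \<Rightarrow> bool list \<Rightarrow> bool" where
  "lex_le x y \<longleftrightarrow> x = y \<or> (x, y) \<in> lexord {(False, True)}"

definition left_total :: "(bool list \<Rightarrow> bool list option) \<Rightarrow> bool" where
  "left_total U \<longleftrightarrow>
     (\<forall>n x y. length x = n \<and> length y = n \<and> U y \<noteq> None \<and> lex_le x y \<longrightarrow> U x \<noteq> None)"

end

theory Submission
  imports Defs "HOL-Library.Nat_Bijection"
begin

text \<open>A recursive function is evaluated by searching for the least certificate (a trace of
  justified evaluation steps) of its computation, so machines can be presented as unbounded
  searches for witnesses of decidable relations. The universal machine runs the function with
  code \<open>e\<close> on \<open>x\<close> when given \<open>1\<^sup>e 0 x\<close>, hence is optimal. It is made left-total without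
  lengthening any description: the \<open>i\<close>-th string of length \<open>n\<close> in lexicographic order gets the
  output of the \<open>i\<close>-th string of length \<open>n\<close> observed to halt in a dovetailed simulation.

  Conversely, let \<open>U\<close> be left-total and let the total function \<open>h\<close> with \<open>|h x| \<le> |x| + c\<close>
  translate a machine \<open>V\<close> into \<open>U\<close>. Given the code of \<open>h\<close> and \<open>c\<close>, the diagonal machine \<open>V\<close> works
  on inputs of a length \<open>n\<close> with \<open>2 ^ n > n + c + 1\<close>: two such inputs have images under \<open>h\<close> of
  equal length, and \<open>V\<close> halts on exactly the one whose image is lexicographically larger.
  Left-totality then makes \<open>U\<close> halt on the other image too, contradicting \<open>V = U \<circ> h\<close>.\<close>

definition rec_fn :: "nat \<Rightarrow> (nat list \<Rightarrow> nat) \<Rightarrow> bool" where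
  "rec_fn k f \<longleftrightarrow> (\<exists>r. \<forall>xs. length xs = k \<longrightarrow> eval r xs (f xs))"

lemma rec_fn_cong: "rec_fn k f \<Longrightarrow> (\<And>xs. length xs = k \<Longrightarrow> f xs = g xs) \<Longrightarrow> rec_fn k g"
  unfolding rec_fn_def by metis

lemma rec_fn_Zero: "rec_fn k (\<lambda>_. 0)"
  using eval_Zero unfolding rec_fn_def by blast

lemma rec_fn_Proj: "i < k \<Longrightarrow> rec_fn k (\<lambda>xs. xs ! i)"
  unfolding rec_fn_def by (metis eval_Proj)

lemma rec_fn_Succ: "rec_fn 1 (\<lambda>xs. Suc (hd xs))"
  unfolding rec_fn_def
proof (intro exI allI impI)
  fix xs :: "nat list" assume "length xs = 1"
  then obtain x where "xs = [x]" by (metis One_nat_def length_0_conv length_Suc_conv)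
  then show "eval Succ xs (Suc (hd xs))" using eval_Succ by simp
qed

lemma rec_fn_list:
  assumes "\<forall>g\<in>set gs. rec_fn k g"
  shows "\<exists>rs. list_all2 (\<lambda>r g. \<forall>xs. length xs = k \<longrightarrow> eval r xs (g xs)) rs gs"
  using assms
proof (induction gs)
  case (Cons g gs)
  then obtain rs where "list_all2 (\<lambda>r g. \<forall>xs. length xs = k \<longrightarrow> eval r xs (g xs)) rs gs" by auto
  moreover obtain r where "\<forall>xs. length xs = k \<longrightarrow> eval r xs (g xs)"
    using Cons.prems unfolding rec_fn_def by auto
  ultimately show ?case by blast
qed simp

lemma rec_fn_Comp:
  assumes "rec_fn m f" "length gs = m" "\<forall>g\<in>set gs. rec_fn k g"
  shows "rec_fn k (\<lambda>xs. f (map (\<lambda>g. g xs) gs))"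
proof -
  obtain rf where rf: "\<forall>xs. length xs = m \<longrightarrow> eval rf xs (f xs)"
    using assms(1) unfolding rec_fn_def by auto
  obtain rs where rs: "list_all2 (\<lambda>r g. \<forall>xs. length xs = k \<longrightarrow> eval r xs (g xs)) rs gs"
    using rec_fn_list[OF assms(3)] by auto
  show ?thesis unfolding rec_fn_def
  proof (intro exI allI impI)
    fix xs :: "nat list" assume xs: "length xs = k"
    have "list_all2 (\<lambda>g y. eval g xs y) rs (map (\<lambda>g. g xs) gs)"
      using rs xs by (auto simp: list_all2_conv_all_nth)
    then show "eval (Comp rf rs) xs (f (map (\<lambda>g. g xs) gs))"
      using rf assms(2) by (auto intro: eval_Comp)
  qed
qed

lemma rec_fn_Comp1: "rec_fn 1 f \<Longrightarrow> rec_fn k g \<Longrightarrow> rec_fn k (\<lambda>xs. f [g xs])"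
  using rec_fn_Comp[of 1 f "[g]" k] by simp

lemma rec_fn_Comp2: "rec_fn 2 f \<Longrightarrow> rec_fn k g \<Longrightarrow> rec_fn k h \<Longrightarrow> rec_fn k (\<lambda>xs. f [g xs, h xs])"
  using rec_fn_Comp[of 2 f "[g,h]" k] by simp

fun prim_rec :: "(nat list \<Rightarrow> nat) \<Rightarrow> (nat list \<Rightarrow> nat) \<Rightarrow> nat \<Rightarrow> nat list \<Rightarrow> nat" where
  "prim_rec f g 0 xs = f xs"
| "prim_rec f g (Suc n) xs = g (prim_rec f g n xs # n # xs)"

lemma rec_fn_Prim:
  assumes "rec_fn k f" "rec_fn (Suc (Suc k)) g"
  shows "rec_fn (Suc k) (\<lambda>xs. prim_rec f g (hd xs) (tl xs))"
proof -
  obtain rf where rf: "\<forall>xs. length xs = k \<longrightarrow> eval rf xs (f xs)"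
    using assms(1) unfolding rec_fn_def by auto
  obtain rg where rg: "\<forall>xs. length xs = Suc (Suc k) \<longrightarrow> eval rg xs (g xs)"
    using assms(2) unfolding rec_fn_def by auto
  have *: "eval (Prim rf rg) (n # ys) (prim_rec f g n ys)" if "length ys = k" for n ys
    using that by (induction n) (auto intro!: eval_Prim0 eval_PrimS rf[rule_format] rg[rule_format])
  show ?thesis unfolding rec_fn_def
  proof (intro exI allI impI)
    fix xs :: "nat list" assume "length xs = Suc k"
    then obtain n ys where "xs = n # ys" "length ys = k" by (metis length_Suc_conv)
    then show "eval (Prim rf rg) xs (prim_rec f g (hd xs) (tl xs))" using * by simp
  qed
qed

lemma rec_fn_by_prim_rec:
  assumes "rec_fn k f" "rec_fn (Suc (Suc k)) g"
    and "\<And>n ys. length ys = k \<Longrightarrow> prim_rec f g n ys = h (n # ys)" and "m = Suc k"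
  shows "rec_fn m h"
  using rec_fn_Prim[OF assms(1,2)] unfolding assms(4)
  by (rule rec_fn_cong) (metis assms(3) length_Suc_conv list.sel)

lemma rec_fn_const: "rec_fn k (\<lambda>_. c)"
  by (induction c) (use rec_fn_Zero rec_fn_Comp1[OF rec_fn_Succ] in simp_all)

lemma rec_fn_Suc_comp: "rec_fn k f \<Longrightarrow> rec_fn k (\<lambda>xs. Suc (f xs))"
  using rec_fn_Comp1[OF rec_fn_Succ] by simp

lemma rec_fn_add: "rec_fn 2 (\<lambda>xs. xs!0 + xs!1)"
proof (rule rec_fn_by_prim_rec)
  show "prim_rec (\<lambda>ys. ys!0) (\<lambda>ys. Suc (ys!0)) n ys = (n # ys)!0 + (n # ys)!1" for n ys
    by (induction n) auto
qed (auto intro: rec_fn_Proj rec_fn_Suc_comp)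

lemma rec_fn_pred: "rec_fn 1 (\<lambda>xs. xs!0 - 1)"
proof (rule rec_fn_by_prim_rec)
  show "prim_rec (\<lambda>ys. 0) (\<lambda>ys. ys!1) n ys = (n # ys)!0 - 1" for n ys
    by (induction n) auto
qed (auto intro: rec_fn_Proj rec_fn_Zero)

lemma rec_fn_diff: "rec_fn 2 (\<lambda>xs. xs!1 - xs!0)"
proof (rule rec_fn_by_prim_rec)
  show "prim_rec (\<lambda>ys. ys!0) (\<lambda>ys. ys!0 - 1) n ys = (n # ys)!1 - (n # ys)!0" for n ys
    by (induction n) auto
qed (auto intro: rec_fn_Proj rec_fn_Comp1[OF rec_fn_pred, simplified])

lemma rec_fn_mult: "rec_fn 2 (\<lambda>xs. xs!0 * xs!1)"
proof (rule rec_fn_by_prim_rec)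
  show "prim_rec (\<lambda>ys. 0) (\<lambda>ys. ys!0 + ys!2) n ys = (n # ys)!0 * (n # ys)!1" for n ys
    by (induction n) auto
qed (auto intro!: rec_fn_Zero rec_fn_Comp2[OF rec_fn_add, simplified] rec_fn_Proj)

lemma rec_fn_triangle: "rec_fn 1 (\<lambda>xs. triangle (xs!0))"
proof (rule rec_fn_by_prim_rec)
  show "prim_rec (\<lambda>ys. 0) (\<lambda>ys. ys!0 + Suc (ys!1)) n ys = triangle ((n # ys)!0)" for n ys
    by (induction n) auto
qed (auto intro!: rec_fn_Zero rec_fn_Comp2[OF rec_fn_add, simplified] rec_fn_Proj rec_fn_Suc_comp)

lemma rec_fn_add_comp: "rec_fn k f \<Longrightarrow> rec_fn k g \<Longrightarrow> rec_fn k (\<lambda>xs. f xs + g xs)"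
  using rec_fn_Comp2[OF rec_fn_add] by simp

lemma rec_fn_diff_comp: "rec_fn k f \<Longrightarrow> rec_fn k g \<Longrightarrow> rec_fn k (\<lambda>xs. f xs - g xs)"
  using rec_fn_Comp2[OF rec_fn_diff, of k g f] by simp

lemma rec_fn_mult_comp: "rec_fn k f \<Longrightarrow> rec_fn k g \<Longrightarrow> rec_fn k (\<lambda>xs. f xs * g xs)"
  using rec_fn_Comp2[OF rec_fn_mult] by simp

lemma rec_fn_triangle_comp: "rec_fn k f \<Longrightarrow> rec_fn k (\<lambda>xs. triangle (f xs))"
  using rec_fn_Comp1[OF rec_fn_triangle] by simp

lemmas rec_fn_intros = rec_fn_add_comp rec_fn_diff_comp rec_fn_mult_comp rec_fn_triangle_comp
  rec_fn_Suc_comp rec_fn_const rec_fn_Proj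

definition npair :: "nat \<Rightarrow> nat \<Rightarrow> nat" where "npair x y = prod_encode (x, y)"
definition nfst :: "nat \<Rightarrow> nat" where "nfst z = fst (prod_decode z)"
definition nsnd :: "nat \<Rightarrow> nat" where "nsnd z = snd (prod_decode z)"

lemma nfst_npair [simp]: "nfst (npair x y) = x" by (simp add: nfst_def npair_def)
lemma nsnd_npair [simp]: "nsnd (npair x y) = y" by (simp add: nsnd_def npair_def)
lemma npair_nfst_nsnd [simp]: "npair (nfst z) (nsnd z) = z" by (simp add: nfst_def nsnd_def npair_def)
lemma npair_triangle: "npair x y = triangle (x + y) + x" by (simp add: npair_def prod_encode_def)
lemma npair_0_0: "npair 0 0 = 0" by (simp add: npair_triangle)
lemma nfst_0 [simp]: "nfst 0 = 0" using nfst_npair[of 0 0] by (simp add: npair_0_0)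
lemma nsnd_0 [simp]: "nsnd 0 = 0" using nsnd_npair[of 0 0] by (simp add: npair_0_0)

lemma triangle_mono: "m \<le> n \<Longrightarrow> triangle m \<le> triangle n"
  unfolding triangle_def by (intro div_le_mono mult_le_mono) auto

lemma triangle_ge: "n \<le> triangle n"
  by (induction n) auto

lemma sum_lessThan_indicator: "s \<le> z \<Longrightarrow> (\<Sum>k<z. if k < s then 1 else 0) = (s::nat)"
proof -
  assume "s \<le> z"
  then have "{k. k < z \<and> k < s} = {..<s}" by auto
  then show ?thesis by (simp add: sum.If_cases Int_def)
qed

text \<open>The diagonal index \<open>nfst z + nsnd z\<close> counts the triangular numbers \<open>triangle (Suc k) \<le> z\<close>;
  this makes the unpairing functions primitive recursive.\<close>
lemma sum_below_triangle: "(\<Sum>k<z. 1 - (triangle (Suc k) - z)) = nfst z + nsnd z"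
proof -
  define s where "s = nfst z + nsnd z"
  have z: "z = triangle s + nfst z" using npair_nfst_nsnd[of z] unfolding npair_triangle s_def by simp
  have "1 - (triangle (Suc k) - z) = (if k < s then 1 else 0)" for k
  proof (cases "k < s")
    case True
    then have "triangle (Suc k) \<le> triangle s" by (intro triangle_mono) simp
    then show ?thesis using True z by simp
  next
    case False
    then have "triangle (Suc s) \<le> triangle (Suc k)" by (intro triangle_mono) simp
    moreover have "nfst z \<le> s" unfolding s_def by simp
    ultimately show ?thesis using False z by simp
  qed
  moreover have "s \<le> z" using z triangle_ge[of s] by simp
  ultimately show ?thesis using sum_lessThan_indicator unfolding s_def by simp
qed

lemma rec_fn_nfst_plus_nsnd: "rec_fn 1 (\<lambda>xs. nfst (xs!0) + nsnd (xs!0))"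
proof -
  have "rec_fn 2 (\<lambda>xs. \<Sum>k<xs!0. 1 - (triangle (Suc k) - xs!1))"
  proof (rule rec_fn_by_prim_rec[where k = 1])
    show "prim_rec (\<lambda>ys. 0) (\<lambda>ys. ys!0 + (1 - (triangle (Suc (ys!1)) - ys!2))) n ys
        = (\<Sum>k<(n # ys)!0. 1 - (triangle (Suc k) - (n # ys)!1))" for n ys
      by (induction n) auto
  qed (auto intro!: rec_fn_intros)
  from rec_fn_Comp2[OF this rec_fn_Proj[of 0 1] rec_fn_Proj[of 0 1]]
  have "rec_fn 1 (\<lambda>xs. \<Sum>k<xs!0. 1 - (triangle (Suc k) - xs!0))" by simp
  then show ?thesis by (simp only: sum_below_triangle)
qed

lemma rec_fn_nfst: "rec_fn 1 (\<lambda>xs. nfst (xs!0))"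
proof -
  have eq: "nfst z = z - triangle (nfst z + nsnd z)" for z
    using npair_nfst_nsnd[of z] unfolding npair_triangle by (metis add_diff_cancel_left')
  have "rec_fn 1 (\<lambda>xs. xs!0 - triangle (nfst (xs!0) + nsnd (xs!0)))"
    by (intro rec_fn_intros rec_fn_nfst_plus_nsnd) simp
  then show ?thesis by (rule rec_fn_cong) (simp add: eq[symmetric])
qed

lemma rec_fn_nsnd: "rec_fn 1 (\<lambda>xs. nsnd (xs!0))"
proof -
  have "rec_fn 1 (\<lambda>xs. (nfst (xs!0) + nsnd (xs!0)) - nfst (xs!0))"
    by (intro rec_fn_intros rec_fn_nfst_plus_nsnd rec_fn_nfst)
  then show ?thesis by (rule rec_fn_cong) auto
qed

lemma rec_fn_npair: "rec_fn 2 (\<lambda>xs. npair (xs!0) (xs!1))"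
proof -
  have "rec_fn 2 (\<lambda>xs. triangle (xs!0 + xs!1) + xs!0)"
    by (intro rec_fn_intros) simp_all
  then show ?thesis by (rule rec_fn_cong) (simp add: npair_triangle)
qed

definition computable :: "(nat \<Rightarrow> nat) \<Rightarrow> bool" where
  "computable f \<longleftrightarrow> rec_fn 1 (\<lambda>xs. f (xs!0))"

definition decidable :: "(nat \<Rightarrow> bool) \<Rightarrow> bool" where
  "decidable P \<longleftrightarrow> computable (\<lambda>x. if P x then 1 else 0)"

lemma computable_iff_eval: "computable f \<longleftrightarrow> (\<exists>r. \<forall>x. eval r [x] (f x))"
  unfolding computable_def rec_fn_def
proof
  assume "\<exists>r. \<forall>xs. length xs = 1 \<longrightarrow> eval r xs (f (xs!0))"
  then show "\<exists>r. \<forall>x. eval r [x] (f x)" by (metis One_nat_def length_Cons list.size(3) nth_Cons_0)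
next
  assume "\<exists>r. \<forall>x. eval r [x] (f x)"
  moreover have "xs = [xs!0]" if "length xs = 1" for xs :: "nat list"
    using that by (cases xs) auto
  ultimately show "\<exists>r. \<forall>xs. length xs = 1 \<longrightarrow> eval r xs (f (xs!0))" by metis
qed

lemma computable_rec_fn_comp: "computable f \<Longrightarrow> rec_fn k g \<Longrightarrow> rec_fn k (\<lambda>xs. f (g xs))"
  unfolding computable_def using rec_fn_Comp1 by fastforce

lemma computableI: "rec_fn 1 (\<lambda>xs. f (xs!0)) \<Longrightarrow> computable f" unfolding computable_def .

lemma computable_id: "computable (\<lambda>x. x)" unfolding computable_def by (rule rec_fn_Proj) simp
lemma computable_const: "computable (\<lambda>x. c)" unfolding computable_def by (rule rec_fn_const)

lemma computable_comp: "computable f \<Longrightarrow> computable g \<Longrightarrow> computable (\<lambda>x. f (g x))"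
  unfolding computable_def using computable_rec_fn_comp[unfolded computable_def] by blast

lemma computable_rec_fn2: "rec_fn 2 h \<Longrightarrow> computable f \<Longrightarrow> computable g \<Longrightarrow> computable (\<lambda>x. h [f x, g x])"
  unfolding computable_def using rec_fn_Comp2 by fastforce

lemma computable_add: "computable f \<Longrightarrow> computable g \<Longrightarrow> computable (\<lambda>x. f x + g x)"
  using computable_rec_fn2[OF rec_fn_add] by simp
lemma computable_diff: "computable f \<Longrightarrow> computable g \<Longrightarrow> computable (\<lambda>x. f x - g x)"
  using computable_rec_fn2[OF rec_fn_diff, of g f] by simp
lemma computable_mult: "computable f \<Longrightarrow> computable g \<Longrightarrow> computable (\<lambda>x. f x * g x)"
  using computable_rec_fn2[OF rec_fn_mult] by simp
lemma computable_npair: "computable f \<Longrightarrow> computable g \<Longrightarrow> computable (\<lambda>x. npair (f x) (g x))"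
  using computable_rec_fn2[OF rec_fn_npair] by simp
lemma computable_Suc: "computable f \<Longrightarrow> computable (\<lambda>x. Suc (f x))"
  unfolding computable_def by (rule rec_fn_Comp1[OF rec_fn_Succ, simplified])
lemma computable_nfst: "computable f \<Longrightarrow> computable (\<lambda>x. nfst (f x))"
  using computable_comp[OF computableI[OF rec_fn_nfst]] .
lemma computable_nsnd: "computable f \<Longrightarrow> computable (\<lambda>x. nsnd (f x))"
  using computable_comp[OF computableI[OF rec_fn_nsnd]] .

definition computable2 :: "(nat \<Rightarrow> nat \<Rightarrow> nat) \<Rightarrow> bool" where
  "computable2 F \<longleftrightarrow> computable (\<lambda>p. F (nfst p) (nsnd p))"

lemma computable2_app: "computable2 F \<Longrightarrow> computable f \<Longrightarrow> computable g \<Longrightarrow> computable (\<lambda>x. F (f x) (g x))"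
  unfolding computable2_def using computable_comp[OF _ computable_npair, of "\<lambda>p. F (nfst p) (nsnd p)" f g] by simp

lemma computable_funpow:
  assumes "computable2 F" "computable n" "computable a"
  shows "computable (\<lambda>x. (F x ^^ n x) (a x))"
proof -
  have step: "rec_fn 3 (\<lambda>ys. F (ys!2) (ys!0))"
    using computable_rec_fn_comp[OF assms(1)[unfolded computable2_def]
        rec_fn_Comp2[OF rec_fn_npair rec_fn_Proj[of 2 3] rec_fn_Proj[of 0 3]]]
    by simp
  have "rec_fn 2 (\<lambda>xs. (F (xs!1) ^^ xs!0) (a (xs!1)))"
  proof (rule rec_fn_by_prim_rec[where k = 1])
    show "prim_rec (\<lambda>ys. a (ys!0)) (\<lambda>ys. F (ys!2) (ys!0)) m ys = (F ((m # ys)!1) ^^ (m # ys)!0) (a ((m # ys)!1))"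
      for m ys by (induction m) auto
  qed (use assms(3) step in \<open>simp_all add: computable_def numeral_3_eq_3\<close>)
  from rec_fn_Comp2[OF this assms(2)[unfolded computable_def] rec_fn_Proj[of 0 1]]
  show ?thesis unfolding computable_def by simp
qed

lemma computable_cong: "computable f \<Longrightarrow> (\<And>x. f x = g x) \<Longrightarrow> computable g"
  by (simp add: computable_def)

lemma decidable_cong: "decidable P \<Longrightarrow> (\<And>x. P x = Q x) \<Longrightarrow> decidable Q"
  by (simp add: decidable_def)

lemma computable_If: "decidable P \<Longrightarrow> computable f \<Longrightarrow> computable g \<Longrightarrow> computable (\<lambda>x. if P x then f x else g x)"
proof -
  assume a: "decidable P" "computable f" "computable g"
  have "computable (\<lambda>x. (if P x then 1 else 0) * f x + (1 - (if P x then 1 else 0)) * g x)"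
    using a unfolding decidable_def by (intro computable_add computable_mult computable_diff computable_const)
  then show ?thesis by (rule computable_cong) simp
qed

lemma decidable_eq: "computable f \<Longrightarrow> computable g \<Longrightarrow> decidable (\<lambda>x. f x = g x)"
  unfolding decidable_def
  apply (rule computable_cong[where f="\<lambda>x. 1 - ((f x - g x) + (g x - f x))"])
  by (intro computable_add computable_mult computable_diff computable_const; assumption) auto

lemma decidable_le: "computable f \<Longrightarrow> computable g \<Longrightarrow> decidable (\<lambda>x. f x \<le> g x)"
  unfolding decidable_def
  apply (rule computable_cong[where f="\<lambda>x. 1 - (f x - g x)"])
  by (intro computable_add computable_mult computable_diff computable_const; assumption) auto

lemma decidable_less: "computable f \<Longrightarrow> computable g \<Longrightarrow> decidable (\<lambda>x. f x < g x)"
  unfolding decidable_def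
  apply (rule computable_cong[where f="\<lambda>x. 1 - (Suc (f x) - g x)"])
  by (intro computable_add computable_mult computable_diff computable_const computable_Suc; assumption) auto

lemma decidable_conj: "decidable P \<Longrightarrow> decidable Q \<Longrightarrow> decidable (\<lambda>x. P x \<and> Q x)"
  unfolding decidable_def
  apply (rule computable_cong[where f="\<lambda>x. (if P x then 1 else 0) * (if Q x then 1 else 0)"])
  by (intro computable_mult; assumption) auto

lemma decidable_not: "decidable P \<Longrightarrow> decidable (\<lambda>x. \<not> P x)"
  unfolding decidable_def
  apply (rule computable_cong[where f="\<lambda>x. 1 - (if P x then 1 else 0)"])
  by (intro computable_diff computable_const; assumption) auto

lemma decidable_disj: "decidable P \<Longrightarrow> decidable Q \<Longrightarrow> decidable (\<lambda>x. P x \<or> Q x)"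
proof -
  assume "decidable P" "decidable Q"
  then have "decidable (\<lambda>x. \<not> (\<not> P x \<and> \<not> Q x))" by (intro decidable_not decidable_conj)
  then show ?thesis by (rule decidable_cong) simp
qed

lemma decidable_comp: "decidable P \<Longrightarrow> computable g \<Longrightarrow> decidable (\<lambda>x. P (g x))"
  unfolding decidable_def using computable_comp by fastforce

definition decidable2 :: "(nat \<Rightarrow> nat \<Rightarrow> bool) \<Rightarrow> bool" where
  "decidable2 P \<longleftrightarrow> decidable (\<lambda>p. P (nfst p) (nsnd p))"

lemma decidable2_app: "decidable2 P \<Longrightarrow> computable f \<Longrightarrow> computable g \<Longrightarrow> decidable (\<lambda>x. P (f x) (g x))"
  unfolding decidable2_def using decidable_comp[OF _ computable_npair, of "\<lambda>p. P (nfst p) (nsnd p)" f g] by simp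

lemma computable2I: "computable (\<lambda>p. F (nfst p) (nsnd p)) \<Longrightarrow> computable2 F" unfolding computable2_def .
lemma decidable2I: "decidable (\<lambda>p. P (nfst p) (nsnd p)) \<Longrightarrow> decidable2 P" unfolding decidable2_def .

lemma decidable_bex:
  assumes "decidable2 P" "computable b"
  shows "decidable (\<lambda>x. \<exists>y<b x. P x y)"
proof -
  define F where "F x s = npair (Suc (nfst s)) (if nsnd s = 1 \<or> P x (nfst s) then 1 else 0)" for x s
  have it: "(F x ^^ k) (npair 0 0) = npair k (if \<exists>y<k. P x y then 1 else 0)" for x k
    by (induction k) (auto simp: F_def less_Suc_eq)
  have "computable2 F" unfolding F_def
    apply (rule computable2I)
    apply (intro computable_npair computable_Suc computable_nfst computable_nsnd computable_If decidable_disj decidable_eq computable_const computable_id)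
    apply (rule decidable2_app[OF assms(1)])
    by (intro computable_npair computable_nfst computable_nsnd computable_id)+
  then have "computable (\<lambda>x. nsnd ((F x ^^ b x) (npair 0 0)))"
    by (intro computable_nsnd computable_funpow assms computable_const)
  then show ?thesis unfolding decidable_def by (simp add: it)
qed

lemma decidable_ball:
  assumes "decidable2 P" "computable b"
  shows "decidable (\<lambda>x. \<forall>y<b x. P x y)"
proof -
  have "decidable2 (\<lambda>x y. \<not> P x y)"
    by (rule decidable2I, rule decidable_not, rule decidable2_app[OF assms(1)]) (intro computable_nfst computable_nsnd computable_id)+
  then have "decidable (\<lambda>x. \<not> (\<exists>y<b x. \<not> P x y))"
    by (intro decidable_not decidable_bex assms(2))
  then show ?thesis by (rule decidable_cong) auto
qed

lemma computable_sum:
  assumes "computable2 f" "computable b"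
  shows "computable (\<lambda>x. \<Sum>y<b x. f x y)"
proof -
  define F where "F x s = npair (Suc (nfst s)) (nsnd s + f x (nfst s))" for x s
  have it: "(F x ^^ k) (npair 0 0) = npair k (\<Sum>y<k. f x y)" for x k
    by (induction k) (auto simp: F_def)
  have "computable2 F" unfolding F_def
    apply (rule computable2I)
    apply (intro computable_npair computable_Suc computable_nfst computable_nsnd computable_add computable_id)
    apply (rule computable2_app[OF assms(1)])
    by (intro computable_npair computable_nfst computable_nsnd computable_id)+
  then have "computable (\<lambda>x. nsnd ((F x ^^ b x) (npair 0 0)))"
    by (intro computable_nsnd computable_funpow assms computable_const)
  then show ?thesis by (simp add: it)
qed

definition bounded_least :: "nat \<Rightarrow> (nat \<Rightarrow> bool) \<Rightarrow> nat" where
  "bounded_least b P = (if \<exists>y<b. P y then LEAST y. P y else b)"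

lemma bounded_least_le: "bounded_least b P \<le> b"
  unfolding bounded_least_def by (auto intro: Least_le less_imp_le order.trans)

lemma bounded_least_witness: "\<exists>y<b. P y \<Longrightarrow> bounded_least b P < b \<and> P (bounded_least b P)"
  unfolding bounded_least_def by (auto intro: LeastI le_less_trans[OF Least_le])

lemma less_bounded_least_iff:
  assumes "y < b"
  shows "y < bounded_least b P \<longleftrightarrow> (\<forall>z\<le>y. \<not> P z)"
proof (cases "\<exists>y<b. P y")
  case True
  then have bl: "bounded_least b P = (LEAST y. P y)" and "P (LEAST y. P y)"
    unfolding bounded_least_def by (auto intro: LeastI)
  show ?thesis
  proof
    show "\<forall>z\<le>y. \<not> P z" if "y < bounded_least b P"
      using that unfolding bl by (meson le_less_trans not_less_Least)
    show "y < bounded_least b P" if "\<forall>z\<le>y. \<not> P z"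
      using that \<open>P (LEAST y. P y)\<close> unfolding bl by (meson not_less)
  qed
next
  case False
  then show ?thesis using assms unfolding bounded_least_def by auto
qed

lemma bounded_least_eq_sum: "bounded_least b P = (\<Sum>y<b. if \<forall>z<Suc y. \<not> P z then 1 else 0)"
proof -
  have "(\<Sum>y<b. if \<forall>z<Suc y. \<not> P z then 1 else 0) = (\<Sum>y<b. if y < bounded_least b P then 1 else (0::nat))"
    by (intro sum.cong) (simp_all add: less_bounded_least_iff less_Suc_eq_le)
  then show ?thesis using sum_lessThan_indicator[OF bounded_least_le] by simp
qed

lemma bounded_least_cong:
  assumes "\<And>y. y < b \<Longrightarrow> P y = Q y"
  shows "bounded_least b P = bounded_least b Q"
proof -
  have *: "y < bounded_least b P \<longleftrightarrow> y < bounded_least b Q" if "y < b" for y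
    using that assms by (simp add: less_bounded_least_iff)
  show ?thesis
  proof (rule linorder_cases)
    assume "bounded_least b P < bounded_least b Q"
    then show ?thesis using *[of "bounded_least b P"] bounded_least_le[of b Q] by simp
  next
    assume "bounded_least b Q < bounded_least b P"
    then show ?thesis using *[of "bounded_least b Q"] bounded_least_le[of b P] by simp
  qed
qed

lemma computable_bounded_least:
  assumes "decidable2 P" "computable b"
  shows "computable (\<lambda>x. bounded_least (b x) (P x))"
proof -
  have i: "decidable2 (\<lambda>x y. \<not> P (nfst x) y)"
    by (rule decidable2I, rule decidable_not, rule decidable2_app[OF assms(1)]) (intro computable_nfst computable_nsnd computable_id)+
  have "decidable2 (\<lambda>x y. \<forall>z<Suc y. \<not> P x z)"
    apply (rule decidable2I)
    apply (rule decidable_ball[OF i])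
    by (intro computable_Suc computable_nsnd computable_nfst computable_id computable_npair)
  then have "computable (\<lambda>x. \<Sum>y<b x. if \<forall>z<Suc y. \<not> P x z then 1 else 0)"
    apply (intro computable_sum assms(2))
    apply (rule computable2I, rule computable_If)
    apply (rule decidable2_app, assumption)
    by (intro computable_const computable_nfst computable_nsnd computable_id)+
  then show ?thesis by (simp add: bounded_least_eq_sum)
qed

lemma computable_power2: "computable f \<Longrightarrow> computable (\<lambda>x. 2 ^ f x)"
proof -
  assume a: "computable f"
  have "computable2 (\<lambda>x s. 2 * s)" by (rule computable2I) (intro computable_mult computable_const computable_nsnd computable_id)
  then have "computable (\<lambda>x. ((\<lambda>s. 2 * s) ^^ f x) 1)" by (intro computable_funpow[of "\<lambda>x s. 2 * s"] a computable_const)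
  moreover have "((\<lambda>s. 2 * s) ^^ n) 1 = (2::nat) ^ n" for n by (induction n) auto
  ultimately show ?thesis by simp
qed

lemma div_eq_bounded_least: "0 < d \<Longrightarrow> x div d = bounded_least (Suc x) (\<lambda>q. x < d * Suc q)"
proof -
  assume d: "0 < d"
  have "1 * Suc x \<le> d * Suc x" using d by (intro mult_le_mono1) simp
  then have ex: "\<exists>y<Suc x. x < d * Suc y" by (intro exI[of _ x]) simp
  have "(LEAST q. x < d * Suc q) = x div d"
  proof (rule Least_equality)
    show "x < d * Suc (x div d)" using d by (metis dividend_less_div_times mult.commute mult_Suc_right add.commute)
    show "x div d \<le> y" if "x < d * Suc y" for y
      using that d by (metis less_Suc_eq_le less_mult_imp_div_less mult.commute)
  qed
  then show ?thesis using ex unfolding bounded_least_def by simp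
qed

lemma computable_div: "computable f \<Longrightarrow> computable g \<Longrightarrow> computable (\<lambda>x. f x div g x)"
proof -
  assume a: "computable f" "computable g"
  have "computable (\<lambda>x. if g x = 0 then 0 else bounded_least (Suc (f x)) (\<lambda>q. f x < g x * Suc q))"
    apply (intro computable_If decidable_eq a computable_const computable_bounded_least computable_Suc)
    apply (rule decidable2I, rule decidable_less)
    apply (rule computable_comp[OF a(1)], rule computable_nfst, rule computable_id)
    apply (intro computable_mult computable_Suc computable_nsnd computable_id)
    by (rule computable_comp[OF a(2)], rule computable_nfst, rule computable_id)
  then show ?thesis by (rule computable_cong) (simp add: div_eq_bounded_least)
qed

lemma computable_mod: "computable f \<Longrightarrow> computable g \<Longrightarrow> computable (\<lambda>x. f x mod g x)"
proof -
  assume a: "computable f" "computable g"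
  have "computable (\<lambda>x. f x - g x * (f x div g x))" by (intro computable_diff computable_mult computable_div a)
  then show ?thesis by (rule computable_cong) (simp add: minus_mult_div_eq_mod)
qed

lemma sum_nonzero_funpow:
  assumes "\<And>k. (f ^^ k) z = 0 \<longleftrightarrow> n \<le> k" and "n \<le> z"
  shows "(\<Sum>k<z. if (f ^^ k) z = 0 then 0 else 1) = (n::nat)"
proof -
  have "(\<Sum>k<z. if (f ^^ k) z = 0 then 0 else 1) = (\<Sum>k<z. if k < n then 1 else (0::nat))"
    using assms(1) by (intro sum.cong) auto
  then show ?thesis using sum_lessThan_indicator[OF assms(2)] by simp
qed

definition ncons :: "nat \<Rightarrow> nat \<Rightarrow> nat" where "ncons a b = Suc (npair a b)"
definition nhd :: "nat \<Rightarrow> nat" where "nhd z = nfst (z - 1)"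
definition ntl :: "nat \<Rightarrow> nat" where "ntl z = nsnd (z - 1)"

lemma nhd_ncons [simp]: "nhd (ncons a b) = a" by (simp add: nhd_def ncons_def)
lemma ntl_ncons [simp]: "ntl (ncons a b) = b" by (simp add: ntl_def ncons_def)
lemma ncons_neq_0 [simp]: "ncons a b \<noteq> 0" by (simp add: ncons_def)
lemma ntl_0 [simp]: "ntl 0 = 0" by (simp add: ntl_def)

lemma ncons_nhd_ntl: "z \<noteq> 0 \<Longrightarrow> z = ncons (nhd z) (ntl z)"
  by (cases z) (auto simp: ncons_def nhd_def ntl_def)

lemma list_encode_Cons [simp]: "list_encode (x # xs) = ncons x (list_encode xs)"
  by (simp add: ncons_def npair_def)

lemma list_decode_ncons [simp]: "list_decode (ncons a b) = a # list_decode b"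
  by (simp add: ncons_def npair_def)

declare list_encode.simps(2) [simp del]

lemma length_le_list_encode: "length xs \<le> list_encode xs"
  by (induction xs) (auto simp: ncons_def intro: order.trans[OF _ le_prod_encode_2] simp: npair_def)

definition nnth :: "nat \<Rightarrow> nat \<Rightarrow> nat" where "nnth z i = nhd ((ntl ^^ i) z)"
definition nlength :: "nat \<Rightarrow> nat" where "nlength z = (\<Sum>k<z. if (ntl ^^ k) z = 0 then 0 else 1)"

lemma funpow_ntl_list_encode: "(ntl ^^ k) (list_encode xs) = list_encode (drop k xs)"
proof (induction k arbitrary: xs)
  case 0 then show ?case by simp
next
  case (Suc k)
  show ?case
  proof (cases xs)
    case Nil
    then show ?thesis using Suc[of "[]"] by (simp add: funpow_Suc_right del: funpow.simps)
  next
    case (Cons a ys)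
    then show ?thesis using Suc[of ys] by (simp add: funpow_Suc_right del: funpow.simps)
  qed
qed

lemma nnth_list_encode [simp]: "i < length xs \<Longrightarrow> nnth (list_encode xs) i = xs ! i"
  by (simp add: nnth_def funpow_ntl_list_encode Cons_nth_drop_Suc[symmetric])

lemma list_encode_eq_0_iff: "list_encode xs = 0 \<longleftrightarrow> xs = []"
  by (cases xs) simp_all

lemma nlength_list_encode [simp]: "nlength (list_encode xs) = length xs"
  unfolding nlength_def
  by (rule sum_nonzero_funpow) (simp_all add: funpow_ntl_list_encode list_encode_eq_0_iff length_le_list_encode)

lemma nlength_eq_length: "nlength z = length (list_decode z)" using nlength_list_encode[of "list_decode z"] by simp
lemma nnth_eq_nth: "i < length (list_decode z) \<Longrightarrow> nnth z i = list_decode z ! i" using nnth_list_encode[of i "list_decode z"] by simp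

lemma computable_ncons: "computable f \<Longrightarrow> computable g \<Longrightarrow> computable (\<lambda>x. ncons (f x) (g x))"
  unfolding ncons_def by (intro computable_Suc computable_npair)
lemma computable_nhd: "computable f \<Longrightarrow> computable (\<lambda>x. nhd (f x))"
  unfolding nhd_def by (intro computable_nfst computable_diff computable_const)
lemma computable_ntl: "computable f \<Longrightarrow> computable (\<lambda>x. ntl (f x))"
  unfolding ntl_def by (intro computable_nsnd computable_diff computable_const)

lemma computable_funpow_ntl: "computable f \<Longrightarrow> computable g \<Longrightarrow> computable (\<lambda>x. (ntl ^^ g x) (f x))"
proof -
  assume a: "computable f" "computable g"
  have "computable2 (\<lambda>x s. ntl s)" by (rule computable2I) (intro computable_ntl computable_nsnd computable_id)
  then show ?thesis using computable_funpow[of "\<lambda>x s. ntl s" g f] a by simp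
qed

lemma computable_nnth: "computable f \<Longrightarrow> computable g \<Longrightarrow> computable (\<lambda>x. nnth (f x) (g x))"
  unfolding nnth_def by (intro computable_nhd computable_funpow_ntl)

lemma computable_nlength: "computable f \<Longrightarrow> computable (\<lambda>x. nlength (f x))"
proof -
  assume a: "computable f"
  have "computable2 (\<lambda>z k. if (ntl ^^ k) z = 0 then 0 else 1)"
    by (rule computable2I) (intro computable_If decidable_eq computable_funpow_ntl computable_nfst computable_nsnd computable_id computable_const)
  then have "computable (\<lambda>z. nlength z)" unfolding nlength_def by (intro computable_sum computable_id)
  then show ?thesis using computable_comp a by blast
qed

fun bdecode :: "nat \<Rightarrow> bool list" where
  "bdecode 0 = []"
| "bdecode (Suc z) = (z mod 2 = 1) # bdecode (z div 2)"

lemma bdecode_bcode [simp]: "bdecode (bcode w) = w"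
  by (induction w) auto

lemma bcode_bdecode [simp]: "bcode (bdecode z) = z"
proof (induction z rule: bdecode.induct)
  case 1 then show ?case by simp
next
  case (2 z)
  have "2 * (z div 2) + 1 + (if z mod 2 = 1 then 1 else 0) = Suc z" by presburger
  then show ?case using 2 by simp
qed

definition btail :: "nat \<Rightarrow> nat" where "btail z = (z - 1) div 2"

lemma btail_bcode_Cons [simp]: "btail (bcode (b # w)) = bcode w"
  by (simp add: btail_def)

lemma btail_0 [simp]: "btail 0 = 0" by (simp add: btail_def)
lemma btail_Suc_double [simp]: "btail (Suc (2 * x)) = x" by (simp add: btail_def)
lemma btail_Suc_Suc_double [simp]: "btail (Suc (Suc (2 * x))) = x" by (simp add: btail_def)

lemma funpow_btail_bcode: "(btail ^^ k) (bcode w) = bcode (drop k w)"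
proof (induction k arbitrary: w)
  case 0 then show ?case by simp
next
  case (Suc k)
  show ?case
  proof (cases w)
    case Nil
    then show ?thesis using Suc[of "[]"] by (simp add: funpow_Suc_right del: funpow.simps)
  next
    case (Cons a ys)
    then show ?thesis using Suc[of ys] by (simp add: funpow_Suc_right del: funpow.simps)
  qed
qed

lemma length_le_bcode: "length w \<le> bcode w"
  by (induction w) auto

lemma bcode_eq_0_iff: "bcode w = 0 \<longleftrightarrow> w = []"
  by (cases w) auto

definition blength :: "nat \<Rightarrow> nat" where "blength z = (\<Sum>k<z. if (btail ^^ k) z = 0 then 0 else 1)"

lemma blength_bcode [simp]: "blength (bcode w) = length w"
  unfolding blength_def
  by (rule sum_nonzero_funpow) (simp_all add: funpow_btail_bcode bcode_eq_0_iff length_le_bcode)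

lemma blength_eq_length: "blength z = length (bdecode z)"
  using blength_bcode[of "bdecode z"] by simp

fun rank :: "bool list \<Rightarrow> nat" where
  "rank [] = 0"
| "rank (b # w) = (if b then 2 ^ length w else 0) + rank w"

fun horner :: "bool list \<Rightarrow> nat \<Rightarrow> nat" where
  "horner [] a = a"
| "horner (b # w) a = horner w (2 * a + (if b then 1 else 0))"

lemma horner_rank: "horner w a = a * 2 ^ length w + rank w"
  by (induction w arbitrary: a) (auto simp: algebra_simps)

lemma rank_less: "rank w < 2 ^ length w"
  by (induction w) auto

definition bhead :: "nat \<Rightarrow> nat" where "bhead z = (z - 1) mod 2"
lemma bhead_bcode_Cons [simp]: "bhead (bcode (b # w)) = (if b then 1 else 0)"
  by (simp add: bhead_def)

lemma bhead_Suc_double [simp]: "bhead (Suc (2 * x)) = 0" by (simp add: bhead_def)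
lemma bhead_Suc_Suc_double [simp]: "bhead (Suc (Suc (2 * x))) = 1" by (simp add: bhead_def)

definition rank_step :: "nat \<Rightarrow> nat" where "rank_step s = npair (btail (nfst s)) (2 * nsnd s + bhead (nfst s))"

lemma funpow_rank_step: "(rank_step ^^ length w) (npair (bcode w) a) = npair 0 (horner w a)"
  by (induction w arbitrary: a) (auto simp: rank_step_def funpow_Suc_right simp del: funpow.simps)

definition brank :: "nat \<Rightarrow> nat" where "brank z = nsnd ((rank_step ^^ blength z) (npair z 0))"

lemma brank_bcode [simp]: "brank (bcode w) = rank w"
  unfolding brank_def by (simp add: funpow_rank_step horner_rank)

lemma computable_btail: "computable f \<Longrightarrow> computable (\<lambda>x. btail (f x))"
  unfolding btail_def by (intro computable_div computable_diff computable_const)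

lemma computable_funpow_btail: "computable f \<Longrightarrow> computable g \<Longrightarrow> computable (\<lambda>x. (btail ^^ g x) (f x))"
proof -
  assume a: "computable f" "computable g"
  have "computable2 (\<lambda>x s. btail s)" by (rule computable2I) (intro computable_btail computable_nsnd computable_id)
  then show ?thesis using computable_funpow[of "\<lambda>x s. btail s" g f] a by simp
qed

lemma computable_blength: "computable f \<Longrightarrow> computable (\<lambda>x. blength (f x))"
proof -
  assume a: "computable f"
  have "computable2 (\<lambda>z k. if (btail ^^ k) z = 0 then 0 else 1)"
    by (rule computable2I) (intro computable_If decidable_eq computable_funpow_btail computable_nfst computable_nsnd computable_id computable_const)
  then have "computable (\<lambda>z. blength z)" unfolding blength_def by (intro computable_sum computable_id)
  then show ?thesis using computable_comp a by blast
qed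

lemma computable_bhead: "computable f \<Longrightarrow> computable (\<lambda>x. bhead (f x))"
  unfolding bhead_def by (intro computable_mod computable_diff computable_const)

lemma computable_brank: "computable f \<Longrightarrow> computable (\<lambda>x. brank (f x))"
proof -
  assume a: "computable f"
  have "computable2 (\<lambda>x s. rank_step s)" unfolding rank_step_def
    by (rule computable2I) (intro computable_npair computable_btail computable_nfst computable_nsnd computable_add computable_mult computable_bhead computable_const computable_id)
  then have "computable (\<lambda>z. nsnd ((rank_step ^^ blength z) (npair z 0)))"
    using computable_nsnd[OF computable_funpow[OF _ computable_blength[OF computable_id] computable_npair[OF computable_id computable_const]]] by simp
  then have "computable brank" unfolding brank_def[abs_def] .
  then show ?thesis using computable_comp a by blast
qed

lemma lex_le_rank: "length x = length y \<Longrightarrow> lex_le x y \<longleftrightarrow> rank x \<le> rank y"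
proof (induction x arbitrary: y)
  case Nil then show ?case by (simp add: lex_le_def)
next
  case (Cons a x)
  then obtain b y' where y: "y = b # y'" "length x = length y'" by (cases y) auto
  have IH: "lex_le x y' \<longleftrightarrow> rank x \<le> rank y'" using Cons y by simp
  have rl: "rank x < 2 ^ length y'" "rank y' < 2 ^ length y'" using rank_less y(2) by metis+
  have "lex_le (a # x) (b # y') \<longleftrightarrow> (a = False \<and> b = True) \<or> (a = b \<and> lex_le x y')"
    unfolding lex_le_def by auto
  also have "\<dots> \<longleftrightarrow> rank (a # x) \<le> rank (b # y')"
    using IH rl y(2) by (cases a; cases b) auto
  finally show ?case using y by simp
qed

lemma rank_surj: "i < 2 ^ n \<Longrightarrow> \<exists>w. length w = n \<and> rank w = i"
proof (induction n arbitrary: i)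
  case 0 then show ?case by simp
next
  case (Suc n)
  show ?case
  proof (cases "i < 2 ^ n")
    case True
    then obtain w where "length w = n" "rank w = i" using Suc by blast
    then show ?thesis by (intro exI[of _ "False # w"]) simp
  next
    case False
    then have "i - 2 ^ n < 2 ^ n" using Suc.prems by simp
    then obtain w where "length w = n" "rank w = i - 2 ^ n" using Suc by blast
    then show ?thesis using False by (intro exI[of _ "True # w"]) simp
  qed
qed

lemma eval_Comp_inv: "eval (Comp f gs) xs z \<Longrightarrow> \<exists>ys. list_all2 (\<lambda>g y. eval g xs y) gs ys \<and> eval f ys z"
  by (erule eval.cases) auto

lemma eval_deterministic: "eval r xs y \<Longrightarrow> eval r xs y' \<Longrightarrow> y = y'"
proof (induction r xs y arbitrary: y' rule: eval.induct)
  case (eval_Zero xs) from eval_Zero.prems show ?case by (cases rule: eval.cases) auto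
next
  case (eval_Succ x xs) from eval_Succ.prems show ?case by (cases rule: eval.cases) auto
next
  case (eval_Proj i xs) from eval_Proj.prems show ?case by (cases rule: eval.cases) auto
next
  case (eval_Comp xs gs ys f z)
  from eval_Comp.prems obtain ys' where ys': "list_all2 (\<lambda>g y. eval g xs y) gs ys'" "eval f ys' y'"
    by (auto dest: eval_Comp_inv)
  from eval_Comp have l: "list_all2 (\<lambda>g y. eval g xs y \<and> (\<forall>y'. eval g xs y' \<longrightarrow> y = y')) gs ys"
    by simp
  have "ys = ys'"
    using l ys'(1) unfolding list_all2_conv_all_nth by (auto intro: nth_equalityI)
  then show ?case using eval_Comp ys' by auto
next
  case (eval_Prim0 f xs y) from eval_Prim0.prems show ?case by (cases rule: eval.cases) (auto dest: eval_Prim0.IH)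
next
  case (eval_PrimS f g n xs y z) from eval_PrimS.prems show ?case by (cases rule: eval.cases) (auto dest: eval_PrimS.IH)
next
  case (eval_Mn f n xs)
  have IH1: "\<forall>y'. eval f (n # xs) y' \<longrightarrow> 0 = y'" using eval_Mn by simp
  have IH2: "\<forall>m<n. \<exists>y. (eval f (m # xs) y \<and> (\<forall>y'. eval f (m # xs) y' \<longrightarrow> y = y')) \<and> 0 < y"
    using eval_Mn by simp
  from eval_Mn.prems show ?case
  proof (cases rule: eval.cases)
    case eval_Mn
    show ?thesis
    proof (rule ccontr)
      assume "n \<noteq> y'"
      then have "n < y' \<or> y' < n" by auto
      then show False
      proof
        assume "n < y'"
        then obtain y where "eval f (n # xs) y" "0 < y" using eval_Mn by auto
        then show False using IH1 by fastforce
      next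
        assume "y' < n"
        then obtain y where "eval f (y' # xs) y" "\<forall>y''. eval f (y' # xs) y'' \<longrightarrow> y = y''" "0 < y"
          using IH2 by blast
        then show False using eval_Mn by fastforce
      qed
    qed
  qed
qed

fun recf_code :: "recf \<Rightarrow> nat" where
  "recf_code Zero = npair 0 0"
| "recf_code Succ = npair 1 0"
| "recf_code (Proj i) = npair 2 i"
| "recf_code (Comp f gs) = npair 3 (npair (recf_code f) (list_encode (map recf_code gs)))"
| "recf_code (Prim f g) = npair 4 (npair (recf_code f) (recf_code g))"
| "recf_code (Mn f) = npair 5 (recf_code f)"

section \<open>Certificates\<close>

definition ent_code :: "nat \<Rightarrow> nat" where "ent_code e = nfst e"
definition ent_arg :: "nat \<Rightarrow> nat" where "ent_arg e = nfst (nsnd e)"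
definition ent_val :: "nat \<Rightarrow> nat" where "ent_val e = nfst (nsnd (nsnd e))"
definition ent_aux :: "nat \<Rightarrow> nat" where "ent_aux e = nsnd (nsnd (nsnd e))"
definition entry :: "nat \<Rightarrow> nat \<Rightarrow> nat \<Rightarrow> nat \<Rightarrow> nat" where "entry c x y h = npair c (npair x (npair y h))"

lemma entry_sel [simp]: "ent_code (entry c x y h) = c" "ent_arg (entry c x y h) = x" "ent_val (entry c x y h) = y" "ent_aux (entry c x y h) = h"
  by (simp_all add: ent_code_def ent_arg_def ent_val_def ent_aux_def entry_def)

text \<open>A computation is certified by a trace of entries \<open>entry c x y h\<close>, each recording that the
  function with code \<open>c\<close> maps the argument list coded by \<open>x\<close> to \<open>y\<close>; \<open>h\<close> holds the intermediate
  results (the inner values for \<open>Comp\<close>, the previous value for \<open>Prim\<close>). An entry is \<open>justified\<close>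
  by one rule of \<open>eval\<close>, where \<open>ex Q\<close> asserts that some earlier entry satisfies \<open>Q\<close>. Being a
  valid trace is decidable, so searching for the least certificate computes every recursive function.\<close>
definition justified :: "((nat \<Rightarrow> bool) \<Rightarrow> bool) \<Rightarrow> nat \<Rightarrow> bool" where
  "justified ex e \<longleftrightarrow>
    (nfst (ent_code e) = 0 \<and> ent_val e = 0) \<or>
    (nfst (ent_code e) = 1 \<and> ent_arg e \<noteq> 0 \<and> ent_val e = Suc (nhd (ent_arg e))) \<or>
    (nfst (ent_code e) = 2 \<and> nsnd (ent_code e) < nlength (ent_arg e) \<and> ent_val e = nnth (ent_arg e) (nsnd (ent_code e))) \<or>
    (nfst (ent_code e) = 3 \<and> nlength (ent_aux e) = nlength (nsnd (nsnd (ent_code e))) \<and>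
       (\<forall>j<nlength (nsnd (nsnd (ent_code e))). ex (\<lambda>e'. ent_code e' = nnth (nsnd (nsnd (ent_code e))) j \<and> ent_arg e' = ent_arg e \<and> ent_val e' = nnth (ent_aux e) j)) \<and>
       ex (\<lambda>e'. ent_code e' = nfst (nsnd (ent_code e)) \<and> ent_arg e' = ent_aux e \<and> ent_val e' = ent_val e)) \<or>
    (nfst (ent_code e) = 4 \<and> ent_arg e \<noteq> 0 \<and> nhd (ent_arg e) = 0 \<and>
       ex (\<lambda>e'. ent_code e' = nfst (nsnd (ent_code e)) \<and> ent_arg e' = ntl (ent_arg e) \<and> ent_val e' = ent_val e)) \<or>
    (nfst (ent_code e) = 4 \<and> ent_arg e \<noteq> 0 \<and> nhd (ent_arg e) \<noteq> 0 \<and>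
       ex (\<lambda>e1. ent_code e1 = ent_code e \<and> ent_arg e1 = ncons (nhd (ent_arg e) - 1) (ntl (ent_arg e)) \<and> ent_val e1 = ent_aux e) \<and>
       ex (\<lambda>e2. ent_code e2 = nsnd (nsnd (ent_code e)) \<and> ent_arg e2 = ncons (ent_aux e) (ncons (nhd (ent_arg e) - 1) (ntl (ent_arg e))) \<and> ent_val e2 = ent_val e)) \<or>
    (nfst (ent_code e) = 5 \<and> ex (\<lambda>e'. ent_code e' = nsnd (ent_code e) \<and> ent_arg e' = ncons (ent_val e) (ent_arg e) \<and> ent_val e' = 0) \<and>
       (\<forall>m<ent_val e. ex (\<lambda>e'. ent_code e' = nsnd (ent_code e) \<and> ent_arg e' = ncons m (ent_arg e) \<and> 0 < ent_val e')))"

definition justified_in :: "nat \<Rightarrow> nat list \<Rightarrow> bool" where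
  "justified_in e S = justified (\<lambda>P. \<exists>e'\<in>set S. P e') e"

definition valid_trace :: "nat list \<Rightarrow> bool" where
  "valid_trace L \<longleftrightarrow> (\<forall>i<length L. justified_in (L!i) (take i L))"

definition sound_entry :: "nat \<Rightarrow> bool" where
  "sound_entry e \<longleftrightarrow> (\<forall>r. ent_code e = recf_code r \<longrightarrow> eval r (list_decode (ent_arg e)) (ent_val e))"

context
  fixes S :: "nat set" and e :: nat
  assumes justified: "justified (\<lambda>P. \<exists>e'\<in>S. P e') e" and sound: "\<forall>e'\<in>S. sound_entry e'"
begin

lemma sound_entryD: "e' \<in> S \<Longrightarrow> ent_code e' = recf_code r \<Longrightarrow> eval r (list_decode (ent_arg e')) (ent_val e')"
  using sound unfolding sound_entry_def by blast

lemma justified_sound_Comp: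
  assumes ec: "ent_code e = recf_code (Comp f gs)"
  shows "eval (Comp f gs) (list_decode (ent_arg e)) (ent_val e)"
proof -
  have t: "nlength (ent_aux e) = length gs"
    "\<forall>j<length gs. \<exists>e'\<in>S. ent_code e' = recf_code (gs!j) \<and> ent_arg e' = ent_arg e \<and> ent_val e' = nnth (ent_aux e) j"
    "\<exists>e'\<in>S. ent_code e' = recf_code f \<and> ent_arg e' = ent_aux e \<and> ent_val e' = ent_val e"
    using justified ec by (simp_all add: justified_def)
  have "list_all2 (\<lambda>g y. eval g (list_decode (ent_arg e)) y) gs (list_decode (ent_aux e))"
    unfolding list_all2_conv_all_nth
  proof (intro conjI allI impI)
    show "length gs = length (list_decode (ent_aux e))" using t(1) by (simp add: nlength_eq_length)
    fix j assume j: "j < length gs"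
    then obtain e' where "e' \<in> S" "ent_code e' = recf_code (gs!j)" "ent_arg e' = ent_arg e"
      "ent_val e' = nnth (ent_aux e) j"
      using t(2) by blast
    then show "eval (gs!j) (list_decode (ent_arg e)) (list_decode (ent_aux e) ! j)"
      using sound_entryD j t(1) by (metis nlength_eq_length nnth_eq_nth)
  qed
  moreover have "eval f (list_decode (ent_aux e)) (ent_val e)" using t(3) sound_entryD by metis
  ultimately show ?thesis by (rule eval_Comp)
qed

lemma justified_sound_Prim:
  assumes ec: "ent_code e = recf_code (Prim f g)"
  shows "eval (Prim f g) (list_decode (ent_arg e)) (ent_val e)"
proof -
  have "ent_arg e \<noteq> 0" using justified ec by (simp add: justified_def, elim disjE conjE, simp_all)
  then have dx: "list_decode (ent_arg e) = nhd (ent_arg e) # list_decode (ntl (ent_arg e))"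
    by (metis ncons_nhd_ntl list_decode_ncons)
  show ?thesis
  proof (cases "nhd (ent_arg e) = 0")
    case True
    then have "\<exists>e'\<in>S. ent_code e' = recf_code f \<and> ent_arg e' = ntl (ent_arg e) \<and> ent_val e' = ent_val e"
      using justified ec by (simp_all add: justified_def)
    then have "eval f (list_decode (ntl (ent_arg e))) (ent_val e)" using sound_entryD by metis
    then show ?thesis using dx True by (auto intro: eval_Prim0)
  next
    case False
    let ?x = "ncons (nhd (ent_arg e) - 1) (ntl (ent_arg e))"
    obtain e1 e2 where e12: "e1 \<in> S" "ent_code e1 = recf_code (Prim f g)" "ent_arg e1 = ?x" "ent_val e1 = ent_aux e"
      "e2 \<in> S" "ent_code e2 = recf_code g" "ent_arg e2 = ncons (ent_aux e) ?x" "ent_val e2 = ent_val e"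
      using justified ec False by (simp add: justified_def) blast
    have "eval (Prim f g) ((nhd (ent_arg e) - 1) # list_decode (ntl (ent_arg e))) (ent_val e1)"
      using sound_entryD[OF e12(1,2)] e12(3) by simp
    moreover have "eval g (ent_val e1 # (nhd (ent_arg e) - 1) # list_decode (ntl (ent_arg e))) (ent_val e)"
      using sound_entryD[OF e12(5,6)] e12(4,7,8) by simp
    ultimately have "eval (Prim f g) (Suc (nhd (ent_arg e) - 1) # list_decode (ntl (ent_arg e))) (ent_val e)"
      by (rule eval_PrimS)
    then show ?thesis using dx False by simp
  qed
qed

lemma justified_sound_Mn:
  assumes ec: "ent_code e = recf_code (Mn f)"
  shows "eval (Mn f) (list_decode (ent_arg e)) (ent_val e)"
proof -
  have t: "\<exists>e'\<in>S. ent_code e' = recf_code f \<and> ent_arg e' = ncons (ent_val e) (ent_arg e) \<and> ent_val e' = 0"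
    "\<forall>m<ent_val e. \<exists>e'\<in>S. ent_code e' = recf_code f \<and> ent_arg e' = ncons m (ent_arg e) \<and> 0 < ent_val e'"
    using justified ec by (simp_all add: justified_def)
  have "eval f (ent_val e # list_decode (ent_arg e)) 0" using t(1) sound_entryD by fastforce
  moreover have "\<forall>m<ent_val e. \<exists>y. eval f (m # list_decode (ent_arg e)) y \<and> 0 < y"
    using t(2) sound_entryD by fastforce
  ultimately show ?thesis by (rule eval_Mn)
qed

lemma justified_sound: "sound_entry e"
  unfolding sound_entry_def
proof (intro allI impI)
  fix r assume ec: "ent_code e = recf_code r"
  show "eval r (list_decode (ent_arg e)) (ent_val e)"
  proof (cases r)
    case Zero
    then show ?thesis using justified ec by (simp add: justified_def eval_Zero)
  next
    case Succ
    then have "ent_arg e \<noteq> 0" "ent_val e = Suc (nhd (ent_arg e))"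
      using justified ec by (simp_all add: justified_def)
    then show ?thesis using Succ by (metis ncons_nhd_ntl list_decode_ncons eval_Succ)
  next
    case (Proj i)
    then have "i < nlength (ent_arg e)" "ent_val e = nnth (ent_arg e) i"
      using justified ec by (simp_all add: justified_def)
    then show ?thesis using Proj by (simp add: nlength_eq_length nnth_eq_nth eval_Proj)
  qed (use ec justified_sound_Comp justified_sound_Prim justified_sound_Mn in simp_all)
qed

end

lemma valid_trace_sound: "valid_trace L \<Longrightarrow> i < length L \<Longrightarrow> sound_entry (L!i)"
proof (induction i rule: less_induct)
  case (less i)
  have "justified (\<lambda>P. \<exists>e'\<in>set (take i L). P e') (L!i)"
    using less.prems unfolding valid_trace_def justified_in_def by blast
  moreover have "\<forall>e'\<in>set (take i L). sound_entry e'"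
    using less by (auto simp: in_set_conv_nth)
  ultimately show ?case by (rule justified_sound)
qed

lemma justified_mono: assumes "justified ex e" "\<And>P. ex P \<Longrightarrow> ex' P" shows "justified ex' e"
  using assms(1) unfolding justified_def
  by (elim disjE) (auto intro: assms(2))

lemma justified_in_mono: "justified_in e S \<Longrightarrow> set S \<subseteq> set S' \<Longrightarrow> justified_in e S'"
  unfolding justified_in_def by (erule justified_mono) blast

lemma valid_trace_Nil: "valid_trace []" by (simp add: valid_trace_def)

lemma valid_trace_append: assumes "valid_trace A" "valid_trace B" shows "valid_trace (A @ B)"
  unfolding valid_trace_def
proof (intro allI impI)
  fix i assume i: "i < length (A @ B)"
  show "justified_in ((A @ B) ! i) (take i (A @ B))"
  proof (cases "i < length A")
    case True
    then show ?thesis using assms(1) unfolding valid_trace_def by (simp add: nth_append)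
  next
    case False
    then have "justified_in (B ! (i - length A)) (take (i - length A) B)" using assms(2) i unfolding valid_trace_def by simp
    then show ?thesis using False by (auto simp: nth_append intro: justified_in_mono)
  qed
qed

lemma valid_trace_snoc: "valid_trace L \<Longrightarrow> justified_in e L \<Longrightarrow> valid_trace (L @ [e])"
  unfolding valid_trace_def by (auto simp: nth_append less_Suc_eq)

abbreviation on_trace :: "nat list \<Rightarrow> nat \<Rightarrow> nat \<Rightarrow> nat \<Rightarrow> bool" where
  "on_trace L c x y \<equiv> \<exists>e\<in>set L. ent_code e = c \<and> ent_arg e = x \<and> ent_val e = y"

lemma valid_trace_combine_list:
  "list_all2 (\<lambda>g y. \<exists>L. valid_trace L \<and> on_trace L (recf_code g) x y) gs ys \<Longrightarrow>
   \<exists>L. valid_trace L \<and> (\<forall>j<length gs. on_trace L (recf_code (gs!j)) x (ys!j))"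
proof (induction gs ys rule: list_all2_induct)
  case Nil then show ?case using valid_trace_Nil by auto
next
  case (Cons g gs y ys)
  then obtain L1 L2 where "valid_trace L1" "on_trace L1 (recf_code g) x y" "valid_trace L2" "\<forall>j<length gs. on_trace L2 (recf_code (gs!j)) x (ys!j)"
    by blast
  then show ?case
    by (intro exI[of _ "L1 @ L2"]) (auto simp: valid_trace_append nth_Cons split: nat.splits)
qed

lemma valid_trace_combine_below:
  "\<forall>m<n. \<exists>y>0. \<exists>L. valid_trace L \<and> on_trace L c (ncons m x) y \<Longrightarrow>
   \<exists>L. valid_trace L \<and> (\<forall>m<n. \<exists>e\<in>set L. ent_code e = c \<and> ent_arg e = ncons m x \<and> 0 < ent_val e)"
proof (induction n)
  case 0 then show ?case using valid_trace_Nil by auto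
next
  case (Suc n)
  then obtain L1 where L1: "valid_trace L1" "\<forall>m<n. \<exists>e\<in>set L1. ent_code e = c \<and> ent_arg e = ncons m x \<and> 0 < ent_val e" by auto
  from Suc.prems obtain y L2 where L2: "0 < y" "valid_trace L2" "on_trace L2 c (ncons n x) y" by blast
  show ?case
    using L1 L2 by (intro exI[of _ "L1 @ L2"]) (auto simp: valid_trace_append less_Suc_eq)
qed

lemma eval_valid_trace: "eval r xs y \<Longrightarrow> \<exists>L. valid_trace L \<and> on_trace L (recf_code r) (list_encode xs) y"
proof (induction r xs y rule: eval.induct)
  case (eval_Zero xs)
  have "justified_in (entry (recf_code Zero) (list_encode xs) 0 0) []" by (simp add: justified_in_def justified_def)
  then show ?case using valid_trace_snoc[OF valid_trace_Nil] by (intro exI[of _ "[entry (recf_code Zero) (list_encode xs) 0 0]"]) simp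
next
  case (eval_Succ x xs)
  have "justified_in (entry (recf_code Succ) (list_encode (x # xs)) (Suc x) 0) []" by (simp add: justified_in_def justified_def)
  then show ?case using valid_trace_snoc[OF valid_trace_Nil] by (intro exI[of _ "[entry (recf_code Succ) (list_encode (x # xs)) (Suc x) 0]"]) simp
next
  case (eval_Proj i xs)
  have "justified_in (entry (recf_code (Proj i)) (list_encode xs) (xs ! i) 0) []" using eval_Proj by (simp add: justified_in_def justified_def)
  then show ?case using valid_trace_snoc[OF valid_trace_Nil] by (intro exI[of _ "[entry (recf_code (Proj i)) (list_encode xs) (xs ! i) 0]"]) simp
next
  case (eval_Comp xs gs ys f z)
  have "list_all2 (\<lambda>g y. \<exists>L. valid_trace L \<and> on_trace L (recf_code g) (list_encode xs) y) gs ys"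
    using eval_Comp(1) by (rule list_all2_mono) blast
  from valid_trace_combine_list[OF this] obtain Lg where Lg: "valid_trace Lg" "\<forall>j<length gs. on_trace Lg (recf_code (gs!j)) (list_encode xs) (ys!j)" by blast
  from eval_Comp obtain Lf where Lf: "valid_trace Lf" "on_trace Lf (recf_code f) (list_encode ys) z" by blast
  have len: "length ys = length gs" using eval_Comp(1) by (simp add: list_all2_lengthD)
  define e where "e = entry (recf_code (Comp f gs)) (list_encode xs) z (list_encode ys)"
  have "justified_in e (Lg @ Lf)" unfolding justified_in_def justified_def e_def
    using Lg Lf len by (simp add: eval_nat_numeral; blast)
  then have "valid_trace ((Lg @ Lf) @ [e])" using Lg Lf by (intro valid_trace_snoc valid_trace_append)
  then show ?case by (intro exI[of _ "(Lg @ Lf) @ [e]"]) (simp add: e_def)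
next
  case (eval_Prim0 f xs y g)
  from eval_Prim0 obtain L where L: "valid_trace L" "on_trace L (recf_code f) (list_encode xs) y" by blast
  define e where "e = entry (recf_code (Prim f g)) (list_encode (0 # xs)) y 0"
  have "justified_in e L" unfolding justified_in_def justified_def e_def
    using L by (simp add: eval_nat_numeral; blast)
  then have "valid_trace (L @ [e])" using L by (intro valid_trace_snoc)
  then show ?case by (intro exI[of _ "L @ [e]"]) (simp add: e_def)
next
  case (eval_PrimS f g n xs y z)
  from eval_PrimS obtain L1 where L1: "valid_trace L1" "on_trace L1 (recf_code (Prim f g)) (list_encode (n # xs)) y" by blast
  from eval_PrimS obtain L2 where L2: "valid_trace L2" "on_trace L2 (recf_code g) (list_encode (y # n # xs)) z" by blast
  define e where "e = entry (recf_code (Prim f g)) (list_encode (Suc n # xs)) z y"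
  have "justified_in e (L1 @ L2)" unfolding justified_in_def justified_def e_def
    using L1 L2 by (simp add: eval_nat_numeral; blast)
  then have "valid_trace ((L1 @ L2) @ [e])" using L1 L2 by (intro valid_trace_snoc valid_trace_append)
  then show ?case by (intro exI[of _ "(L1 @ L2) @ [e]"]) (simp add: e_def)
next
  case (eval_Mn f n xs)
  from eval_Mn obtain L1 where L1: "valid_trace L1" "on_trace L1 (recf_code f) (list_encode (n # xs)) 0" by blast
  have "\<forall>m<n. \<exists>y>0. \<exists>L. valid_trace L \<and> on_trace L (recf_code f) (ncons m (list_encode xs)) y"
    using eval_Mn(3) by fastforce
  from valid_trace_combine_below[OF this] obtain L2 where L2: "valid_trace L2" "\<forall>m<n. \<exists>e\<in>set L2. ent_code e = recf_code f \<and> ent_arg e = ncons m (list_encode xs) \<and> 0 < ent_val e"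
    by blast
  define e where "e = entry (recf_code (Mn f)) (list_encode xs) n 0"
  have "justified_in e (L1 @ L2)" unfolding justified_in_def justified_def e_def
    using L1 L2 by (simp add: eval_nat_numeral; blast)
  then have "valid_trace ((L1 @ L2) @ [e])" using L1 L2 by (intro valid_trace_snoc valid_trace_append)
  then show ?case by (intro exI[of _ "(L1 @ L2) @ [e]"]) (simp add: e_def)
qed

definition valid_trace_code :: "nat \<Rightarrow> bool" where
  "valid_trace_code w \<longleftrightarrow> (\<forall>i<nlength w. justified (\<lambda>P. \<exists>k<i. P (nnth w k)) (nnth w i))"

lemma valid_trace_code_iff: "valid_trace_code w \<longleftrightarrow> valid_trace (list_decode w)"
proof -
  have "justified (\<lambda>P. \<exists>k<i. P (nnth w k)) (nnth w i) \<longleftrightarrow> justified_in (list_decode w ! i) (take i (list_decode w))"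
    if i: "i < length (list_decode w)" for i
  proof -
    have "(\<lambda>P. \<exists>k<i. P (nnth w k)) = (\<lambda>P. \<exists>e'\<in>set (take i (list_decode w)). P e')"
    proof (intro ext iffI)
      fix P assume "\<exists>k<i. P (nnth w k)"
      then obtain k where "k < i" "P (nnth w k)" by blast
      then show "\<exists>e'\<in>set (take i (list_decode w)). P e'" using i
        by (intro bexI[of _ "list_decode w ! k"]) (auto simp: nnth_eq_nth in_set_conv_nth intro!: exI[of _ k])
    next
      fix P assume "\<exists>e'\<in>set (take i (list_decode w)). P e'"
      then obtain k where "k < i" "k < length (list_decode w)" "P (list_decode w ! k)" by (auto simp: in_set_conv_nth)
      then show "\<exists>k<i. P (nnth w k)" by (auto simp: nnth_eq_nth)
    qed
    then show ?thesis using i by (simp add: justified_in_def nnth_eq_nth)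
  qed
  then show ?thesis unfolding valid_trace_code_def valid_trace_def by (simp add: nlength_eq_length)
qed

definition trace_matches :: "nat \<Rightarrow> nat \<Rightarrow> nat \<Rightarrow> nat \<Rightarrow> bool" where
  "trace_matches c x w k \<longleftrightarrow> ent_code (nnth w k) = c \<and> ent_arg (nnth w k) = ncons x 0"

definition certifies :: "nat \<Rightarrow> nat \<Rightarrow> nat \<Rightarrow> bool" where
  "certifies c x w \<longleftrightarrow> valid_trace_code w \<and> (\<exists>k<nlength w. trace_matches c x w k)"

definition certified_value :: "nat \<Rightarrow> nat \<Rightarrow> nat \<Rightarrow> nat" where
  "certified_value c x w = ent_val (nnth w (bounded_least (nlength w) (trace_matches c x w)))"

lemma certifies_sound: "certifies (recf_code r) x w \<Longrightarrow> eval r [x] (certified_value (recf_code r) x w)"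
proof -
  assume g: "certifies (recf_code r) x w"
  define k where "k = bounded_least (nlength w) (trace_matches (recf_code r) x w)"
  have k: "k < nlength w" "trace_matches (recf_code r) x w k" using bounded_least_witness g unfolding certifies_def k_def by blast+
  have v: "valid_trace (list_decode w)" using g unfolding certifies_def valid_trace_code_iff by simp
  have kl: "k < length (list_decode w)" using k by (simp add: nlength_eq_length)
  have "eval r (list_decode (ent_arg (list_decode w ! k))) (ent_val (list_decode w ! k))"
    using valid_trace_sound[OF v kl] k(2) unfolding trace_matches_def sound_entry_def by (simp add: nnth_eq_nth[OF kl])
  then show ?thesis using k(2) kl unfolding trace_matches_def certified_value_def k_def[symmetric]
    by (simp add: nnth_eq_nth ncons_def[symmetric])
qed

lemma eval_certified: "eval r [x] y \<Longrightarrow> \<exists>w. certifies (recf_code r) x w"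
proof -
  assume "eval r [x] y"
  from eval_valid_trace[OF this] obtain L where L: "valid_trace L" "on_trace L (recf_code r) (list_encode [x]) y" by blast
  then obtain k where "k < length L" "ent_code (L!k) = recf_code r" "ent_arg (L!k) = list_encode [x]" by (auto simp: in_set_conv_nth)
  then have "certifies (recf_code r) x (list_encode L)" using L(1) unfolding certifies_def valid_trace_code_iff trace_matches_def
    by (auto intro!: exI[of _ k])
  then show ?thesis by blast
qed

lemma eval_iff_certified:
  "eval r [x] y \<longleftrightarrow>
     (\<exists>w. certifies (recf_code r) x w) \<and> y = certified_value (recf_code r) x (LEAST w. certifies (recf_code r) x w)"
  (is "_ \<longleftrightarrow> (\<exists>w. ?c w) \<and> y = ?v")
proof
  assume e: "eval r [x] y"
  then have ex: "\<exists>w. ?c w" by (rule eval_certified)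
  then have "eval r [x] ?v" using certifies_sound LeastI_ex by blast
  then show "(\<exists>w. ?c w) \<and> y = ?v" using ex eval_deterministic[OF e] by blast
next
  assume "(\<exists>w. ?c w) \<and> y = ?v"
  then have "?c (LEAST w. ?c w)" "y = ?v" by (auto intro: LeastI_ex)
  then show "eval r [x] y" using certifies_sound by simp
qed

lemmas computable_intros = decidable_ball decidable_bex decidable2I computable2I decidable_conj decidable_disj decidable_not decidable_eq decidable_le decidable_less
  computable_If computable_add computable_diff computable_mult computable_Suc computable_npair computable_nfst computable_nsnd computable_ncons computable_nhd computable_ntl
  computable_nnth computable_nlength computable_bounded_least computable_div computable_mod computable_power2 computable_blength computable_brank computable_btail computable_bhead computable_id computable_const

lemma decidable_valid_trace_code: "decidable valid_trace_code"
  unfolding valid_trace_code_def[abs_def] justified_def ent_code_def ent_arg_def ent_val_def ent_aux_def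
  by (intro computable_intros)

lemma decidable2_certifies: "decidable2 (\<lambda>p w. certifies (nfst p) (nsnd p) w)"
proof -
  have "decidable2 (\<lambda>p w. valid_trace_code w)" by (rule decidable2I, rule decidable_comp[OF decidable_valid_trace_code]) (intro computable_intros)
  then show ?thesis unfolding certifies_def trace_matches_def ent_code_def ent_arg_def decidable2_def
    by (intro computable_intros) (simp add: decidable2_def)
qed

lemma computable2_certified_value: "computable2 (\<lambda>p w. certified_value (nfst p) (nsnd p) w)"
  unfolding certified_value_def trace_matches_def ent_code_def ent_arg_def ent_val_def
  by (intro computable_intros)

lemma decidable_certifies: "computable c \<Longrightarrow> computable x \<Longrightarrow> computable w \<Longrightarrow> decidable (\<lambda>v. certifies (c v) (x v) (w v))"
  using decidable2_app[OF decidable2_certifies computable_npair] by simp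
lemma computable_certified_value: "computable c \<Longrightarrow> computable x \<Longrightarrow> computable w \<Longrightarrow> computable (\<lambda>v. certified_value (c v) (x v) (w v))"
  using computable2_app[OF computable2_certified_value computable_npair] by simp

lemma eval_Mn_iff_Least:
  assumes "\<And>w v. eval r [w, x] v \<longleftrightarrow> v = (if P w then 0 else 1)"
  shows "eval (Mn r) [x] n \<longleftrightarrow> (\<exists>w. P w) \<and> n = (LEAST w. P w)"
proof
  assume "eval (Mn r) [x] n"
  then show "(\<exists>w. P w) \<and> n = (LEAST w. P w)"
  proof (cases rule: eval.cases)
    case eval_Mn
    then have "P n" using assms by (auto split: if_splits)
    moreover have "\<not> P m" if "m < n" for m using eval_Mn(2) that assms by fastforce
    ultimately show ?thesis by (auto intro!: Least_equality[symmetric] simp: not_less[symmetric])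
  qed
next
  assume *: "(\<exists>w. P w) \<and> n = (LEAST w. P w)"
  then have "P n" by (auto intro: LeastI_ex)
  moreover have "\<not> P m" if "m < n" for m using * that not_less_Least by blast
  ultimately show "eval (Mn r) [x] n" by (intro eval_Mn) (auto simp: assms)
qed

lemma search_recf:
  assumes "decidable2 P" "computable2 F"
  shows "\<exists>r. \<forall>x y. eval r [x] y \<longleftrightarrow> (\<exists>w. P x w) \<and> y = F x (LEAST w. P x w)"
proof -
  define g where "g p = (if P (nfst p) (nsnd p) then 0 else (1::nat))" for p
  have "computable g" unfolding g_def[abs_def] using assms(1) unfolding decidable2_def
    by (intro computable_If computable_const)
  moreover have "rec_fn 2 (\<lambda>xs. npair (xs!1) (xs!0))"
    using rec_fn_Comp2[OF rec_fn_npair rec_fn_Proj[of 1 2] rec_fn_Proj[of 0 2]] by simp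
  ultimately have "rec_fn 2 (\<lambda>xs. g (npair (xs!1) (xs!0)))"
    by (rule computable_rec_fn_comp)
  then obtain rQ where rQ0: "\<And>xs. length xs = 2 \<Longrightarrow> eval rQ xs (g (npair (xs!1) (xs!0)))"
    unfolding rec_fn_def by blast
  have rQ: "eval rQ [w, x] v \<longleftrightarrow> v = (if P x w then 0 else 1)" for w x v
  proof -
    have "eval rQ [w, x] (g (npair x w))" using rQ0[of "[w, x]"] by simp
    then have "eval rQ [w, x] v \<longleftrightarrow> v = g (npair x w)" using eval_deterministic by blast
    then show ?thesis unfolding g_def by simp
  qed
  obtain rP where rP0: "\<forall>xs. length xs = 2 \<longrightarrow> eval rP xs (npair (xs!0) (xs!1))"
    using rec_fn_npair unfolding rec_fn_def by blast
  have rP: "eval rP [a, b] (npair a b)" for a b using rP0[rule_format, of "[a, b]"] by simp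
  obtain rF where rF: "\<And>p. eval rF [p] (F (nfst p) (nsnd p))"
    using assms(2) unfolding computable2_def computable_iff_eval by blast
  have Proj0: "eval (Proj 0) [x] x" for x using eval_Proj[of 0 "[x]"] by simp
  have search: "eval (Comp rF [Comp rP [Proj 0, Mn rQ]]) [x] y \<longleftrightarrow> (\<exists>n. eval (Mn rQ) [x] n \<and> y = F x n)" for x y
  proof
    assume "eval (Comp rF [Comp rP [Proj 0, Mn rQ]]) [x] y"
    then obtain v where v: "eval (Comp rP [Proj 0, Mn rQ]) [x] v" "eval rF [v] y"
      by (auto dest!: eval_Comp_inv[of rF] simp: list_all2_Cons1)
    then obtain a n where an: "eval (Proj 0) [x] a" "eval (Mn rQ) [x] n" "eval rP [a, n] v"
      by (auto dest!: eval_Comp_inv[of rP] simp: list_all2_Cons1)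
    have "a = x" using eval_deterministic[OF an(1) Proj0] .
    then have "v = npair x n" using eval_deterministic[OF an(3) rP] by simp
    then have "y = F x n" using eval_deterministic[OF v(2) rF] by simp
    then show "\<exists>n. eval (Mn rQ) [x] n \<and> y = F x n" using an(2) by blast
  next
    assume "\<exists>n. eval (Mn rQ) [x] n \<and> y = F x n"
    then obtain n where n: "eval (Mn rQ) [x] n" "y = F x n" by blast
    then have "eval (Comp rP [Proj 0, Mn rQ]) [x] (npair x n)"
      by (intro eval_Comp[of _ _ "[x, n]"]) (simp_all add: Proj0 rP)
    then show "eval (Comp rF [Comp rP [Proj 0, Mn rQ]]) [x] y"
      using rF[of "npair x n"] n(2) by (intro eval_Comp[of _ _ "[npair x n]"]) simp_all
  qed
  show ?thesis
  proof (intro exI allI)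
    show "eval (Comp rF [Comp rP [Proj 0, Mn rQ]]) [x] y \<longleftrightarrow> (\<exists>w. P x w) \<and> y = F x (LEAST w. P x w)" for x y
      unfolding search eval_Mn_iff_Least[OF rQ] by blast
  qed
qed

definition search_machine :: "(nat \<Rightarrow> nat \<Rightarrow> bool) \<Rightarrow> (nat \<Rightarrow> nat \<Rightarrow> nat) \<Rightarrow> bool list \<Rightarrow> bool list option" where
  "search_machine P F p =
     (if \<exists>w. P (bcode p) w then Some (bdecode (F (bcode p) (LEAST w. P (bcode p) w))) else None)"

lemma machine_search_machine:
  assumes "decidable2 P" "computable2 F"
  shows "machine (search_machine P F)"
proof -
  obtain r where r: "\<And>x y. eval r [x] y \<longleftrightarrow> (\<exists>w. P x w) \<and> y = F x (LEAST w. P x w)"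
    using search_recf[OF assms] by blast
  show ?thesis unfolding machine_def
  proof (intro exI allI)
    show "eval r [bcode x] y \<longleftrightarrow> (\<exists>z. search_machine P F x = Some z \<and> y = bcode z)" for x y
      unfolding r search_machine_def by auto
  qed
qed

text \<open>The strings of length \<open>n\<close> have the codes \<open>level_code n a\<close> for \<open>a < 2 ^ n\<close>.\<close>
abbreviation level_code :: "nat \<Rightarrow> nat \<Rightarrow> nat" where
  "level_code n a \<equiv> 2 ^ n - 1 + a"

lemma bcode_bounds: "2 ^ length w \<le> Suc (bcode w) \<and> Suc (bcode w) < 2 ^ Suc (length w)"
  by (induction w) auto

lemma length_bdecode_eq:
  assumes "2 ^ n \<le> Suc z" "Suc z < 2 ^ Suc n"
  shows "length (bdecode z) = n"
proof (rule ccontr)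
  define m where "m = length (bdecode z)"
  have m: "2 ^ m \<le> Suc z" "Suc z < 2 ^ Suc m"
    using bcode_bounds[of "bdecode z"] unfolding m_def by simp_all
  assume "length (bdecode z) \<noteq> n"
  then consider "Suc m \<le> n" | "Suc n \<le> m" unfolding m_def by linarith
  then show False
  proof cases
    case 1
    then have "2 ^ Suc m \<le> (2::nat) ^ n" by (intro power_increasing) auto
    then show False using m assms by simp
  next
    case 2
    then have "2 ^ Suc n \<le> (2::nat) ^ m" by (intro power_increasing) auto
    then show False using m assms by simp
  qed
qed

lemma level_code_eq_iff: "level_code n a = level_code n b \<longleftrightarrow> a = b"
  by (rule add_left_cancel)

lemma length_bdecode_level: "a < 2 ^ n \<Longrightarrow> length (bdecode (level_code n a)) = n"
  by (rule length_bdecode_eq) auto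

lemma bcode_level_code:
  obtains a where "a < 2 ^ length w" "bcode w = level_code (length w) a"
proof
  show "bcode w = level_code (length w) (bcode w - (2 ^ length w - 1))"
    using bcode_bounds[of w] by simp
  have "2 ^ length w \<le> Suc (bcode w)" "Suc (bcode w) < 2 * 2 ^ length w"
    using bcode_bounds[of w] by simp_all
  then show "bcode w - (2 ^ length w - 1) < 2 ^ length w" by linarith
qed

definition all_certified :: "nat \<Rightarrow> nat \<Rightarrow> nat \<Rightarrow> bool" where
  "all_certified e n s \<longleftrightarrow> (\<forall>a<2 ^ n. \<exists>w<s. certifies e (level_code n a) w)"

definition level_value :: "nat \<Rightarrow> nat \<Rightarrow> nat \<Rightarrow> nat \<Rightarrow> nat" where
  "level_value e n s a = certified_value e (level_code n a) (bounded_least s (certifies e (level_code n a)))"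

lemma computable_level_value:
  assumes "computable e" "computable n" "computable s" "computable a"
  shows "computable (\<lambda>x. level_value (e x) (n x) (s x) (a x))"
  unfolding level_value_def
  by (intro computable_intros decidable_certifies computable_certified_value assms
      computable_comp[OF assms(1)] computable_comp[OF assms(2)] computable_comp[OF assms(3)]
      computable_comp[OF assms(4)])

lemma decidable_all_certified:
  assumes "computable e" "computable n" "computable s"
  shows "decidable (\<lambda>x. all_certified (e x) (n x) (s x))"
  unfolding all_certified_def
  by (intro computable_intros decidable_certifies assms computable_comp[OF assms(1)]
      computable_comp[OF assms(2)] computable_comp[OF assms(3)])

lemma ex_uniform_witness_bound: "\<forall>a<(N::nat). \<exists>w::nat. Q a w \<Longrightarrow> \<exists>s. \<forall>a<N. \<exists>w<s. Q a w"
proof -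
  assume "\<forall>a<N. \<exists>w. Q a w"
  then obtain f where f: "\<forall>a<N. Q a (f a)" by metis
  have "f a < Suc (Max (f ` {..<N}))" if "a < N" for a
    using that by (simp add: le_imp_less_Suc)
  then show ?thesis using f by blast
qed

context
  fixes r :: recf and g :: "nat \<Rightarrow> nat"
  assumes r: "\<And>z. eval r [z] (g z)"
begin

lemma all_certified_eventually: "\<exists>s. all_certified (recf_code r) n s"
  unfolding all_certified_def using eval_certified[OF r] by (intro ex_uniform_witness_bound) blast

lemma level_value_eq:
  assumes "all_certified (recf_code r) n s" "a < 2 ^ n"
  shows "level_value (recf_code r) n s a = g (level_code n a)"
proof -
  have "\<exists>w<s. certifies (recf_code r) (level_code n a) w"
    using assms unfolding all_certified_def by blast
  then have "certifies (recf_code r) (level_code n a) (bounded_least s (certifies (recf_code r) (level_code n a)))"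
    using bounded_least_witness by blast
  then show ?thesis
    unfolding level_value_def using certifies_sound eval_deterministic r by blast
qed

end

section \<open>No left-total machine is effectively optimal\<close>

text \<open>A pair \<open>p < q\<close> of indices in level \<open>n\<close> is coded as \<open>p * 2 ^ n + q\<close>.\<close>
definition same_length_pair :: "(nat \<Rightarrow> nat) \<Rightarrow> nat \<Rightarrow> nat \<Rightarrow> bool" where
  "same_length_pair g n pq \<longleftrightarrow>
     pq div 2 ^ n < pq mod 2 ^ n \<and> blength (g (pq div 2 ^ n)) = blength (g (pq mod 2 ^ n))"

definition diagonal_choice :: "(nat \<Rightarrow> nat) \<Rightarrow> nat \<Rightarrow> nat" where
  "diagonal_choice g n =
     (let pq = bounded_least (2 ^ n * 2 ^ n) (same_length_pair g n); p = pq div 2 ^ n; q = pq mod 2 ^ n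
      in if brank (g p) \<le> brank (g q) then q else p)"

lemma same_length_pair_cong:
  "(\<And>a. a < 2 ^ n \<Longrightarrow> g a = g' a) \<Longrightarrow> pq < 2 ^ n * 2 ^ n \<Longrightarrow> same_length_pair g n pq = same_length_pair g' n pq"
  unfolding same_length_pair_def by (simp add: less_mult_imp_div_less)

lemma diagonal_choice_cong:
  assumes "\<And>a. a < 2 ^ n \<Longrightarrow> g a = g' a" and "\<exists>pq<2 ^ n * 2 ^ n. same_length_pair g n pq"
  shows "diagonal_choice g n = diagonal_choice g' n"
proof -
  define pq where "pq = bounded_least (2 ^ n * 2 ^ n) (same_length_pair g n)"
  have "bounded_least (2 ^ n * 2 ^ n) (same_length_pair g' n) = pq"
    unfolding pq_def by (rule bounded_least_cong) (rule same_length_pair_cong[OF assms(1), symmetric])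
  moreover have "pq < 2 ^ n * 2 ^ n" unfolding pq_def using bounded_least_witness assms(2) by blast
  then have "pq div 2 ^ n < 2 ^ n" "pq mod 2 ^ n < 2 ^ n" by (simp_all add: less_mult_imp_div_less)
  ultimately show ?thesis unfolding diagonal_choice_def Let_def pq_def[symmetric] by (simp add: assms(1))
qed

lemma diagonal_choice_pair:
  assumes "\<exists>pq<2 ^ n * 2 ^ n. same_length_pair g n pq"
  obtains a where "a < 2 ^ n" "diagonal_choice g n < 2 ^ n" "a \<noteq> diagonal_choice g n"
    "blength (g a) = blength (g (diagonal_choice g n))" "brank (g a) \<le> brank (g (diagonal_choice g n))"
proof -
  define pq where "pq = bounded_least (2 ^ n * 2 ^ n) (same_length_pair g n)"
  define p q where "p = pq div 2 ^ n" and "q = pq mod 2 ^ n"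
  have "pq < 2 ^ n * 2 ^ n" "same_length_pair g n pq"
    unfolding pq_def using bounded_least_witness assms by blast+
  then have pq: "p < q" "q < 2 ^ n" "blength (g p) = blength (g q)"
    unfolding same_length_pair_def p_def q_def by simp_all
  have choice: "diagonal_choice g n = (if brank (g p) \<le> brank (g q) then q else p)"
    unfolding diagonal_choice_def Let_def pq_def p_def q_def ..
  show ?thesis
  proof (cases "brank (g p) \<le> brank (g q)")
    case True
    then show ?thesis using that[of p] pq choice by simp
  next
    case False
    then show ?thesis using that[of q] pq choice by simp
  qed
qed

lemma same_length_pair_exists:
  assumes "\<And>a. a < 2 ^ n \<Longrightarrow> blength (g a) \<le> m" and "Suc m < 2 ^ n"
  shows "\<exists>pq<2 ^ n * 2 ^ n. same_length_pair g n pq"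
proof -
  have "\<not> inj_on (\<lambda>a. blength (g a)) {..<2 ^ n}"
  proof
    assume "inj_on (\<lambda>a. blength (g a)) {..<2 ^ n}"
    then have "card {..<(2::nat) ^ n} \<le> card {..m}"
      using assms(1) by (intro card_inj_on_le) auto
    then show False using assms(2) by simp
  qed
  then obtain a b where ab: "a < 2 ^ n" "b < 2 ^ n" "a \<noteq> b" "blength (g a) = blength (g b)"
    unfolding inj_on_def by auto
  obtain p q where pq: "p < q" "q < 2 ^ n" "blength (g p) = blength (g q)"
  proof (cases "a < b")
    case True
    then show ?thesis using that[of a b] ab by simp
  next
    case False
    then have "b < a" using ab(3) by simp
    then show ?thesis using that[of b a] ab by simp
  qed
  have "p * 2 ^ n + q < Suc p * 2 ^ n" using pq by simp
  also have "\<dots> \<le> 2 ^ n * 2 ^ n" using pq by (intro mult_le_mono1) simp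
  finally show ?thesis
    using pq by (intro exI[of _ "p * 2 ^ n + q"]) (simp add: same_length_pair_def)
qed

text \<open>The code \<open>e\<close> of the translation is read off the input length \<open>n = 2 * npair e c + 2\<close>;
  the machine first waits until \<open>e\<close> is certified on all inputs of length \<open>n\<close>.\<close>
definition diagonal_halts :: "nat \<Rightarrow> nat \<Rightarrow> bool" where
  "diagonal_halts z s \<longleftrightarrow>
     (let n = blength z; e = nfst ((n - 2) div 2)
      in 2 \<le> n \<and> n mod 2 = 0 \<and> all_certified e n s \<and>
         (\<exists>pq<2 ^ n * 2 ^ n. same_length_pair (level_value e n s) n pq) \<and>
         z = level_code n (diagonal_choice (level_value e n s) n))"

definition diagonal_machine :: "bool list \<Rightarrow> bool list option" where
  "diagonal_machine = search_machine diagonal_halts (\<lambda>_ _. 0)"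

lemma machine_diagonal_machine: "machine diagonal_machine"
proof -
  have "decidable2 diagonal_halts"
    unfolding diagonal_halts_def Let_def same_length_pair_def diagonal_choice_def
    by (intro computable_intros decidable_all_certified computable_level_value)
  moreover have "computable2 (\<lambda>_ _. 0)" by (intro computable_intros)
  ultimately show ?thesis unfolding diagonal_machine_def by (rule machine_search_machine)
qed

lemma diagonal_machine_halts_iff: "diagonal_machine p \<noteq> None \<longleftrightarrow> (\<exists>s. diagonal_halts (bcode p) s)"
  unfolding diagonal_machine_def search_machine_def by simp

lemma diagonal_halts_level_iff:
  assumes r: "\<And>z. eval r [z] (g z)" and n: "n = 2 * npair (recf_code r) c + 2" and a: "a < 2 ^ n"
  shows "(\<exists>s. diagonal_halts (level_code n a) s) \<longleftrightarrow>
    (\<exists>pq<2 ^ n * 2 ^ n. same_length_pair (\<lambda>a. g (level_code n a)) n pq) \<and>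
    a = diagonal_choice (\<lambda>a. g (level_code n a)) n"
proof -
  let ?e = "recf_code r" and ?G = "\<lambda>a. g (level_code n a)"
  have len: "blength (level_code n a) = n" using length_bdecode_level[OF a] by (simp add: blength_eq_length)
  have "2 \<le> n" "n mod 2 = 0" "nfst ((n - 2) div 2) = ?e" unfolding n by simp_all
  then have "diagonal_halts (level_code n a) s \<longleftrightarrow> all_certified ?e n s \<and>
      (\<exists>pq<2 ^ n * 2 ^ n. same_length_pair (level_value ?e n s) n pq) \<and>
      a = diagonal_choice (level_value ?e n s) n" for s
    unfolding diagonal_halts_def Let_def len level_code_eq_iff by simp
  moreover have "(\<exists>pq<2 ^ n * 2 ^ n. same_length_pair (level_value ?e n s) n pq) \<longleftrightarrow>
      (\<exists>pq<2 ^ n * 2 ^ n. same_length_pair ?G n pq)"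
    "(\<exists>pq<2 ^ n * 2 ^ n. same_length_pair ?G n pq) \<Longrightarrow> diagonal_choice (level_value ?e n s) n = diagonal_choice ?G n"
    if "all_certified ?e n s" for s
    using same_length_pair_cong[of n "level_value ?e n s" ?G] diagonal_choice_cong[of n ?G "level_value ?e n s"]
      level_value_eq[OF r that] by auto
  ultimately show ?thesis using all_certified_eventually[OF r, of n] by metis
qed

lemma double_le_power_two: "2 * n \<le> (2::nat) ^ n"
proof (induction n)
  case (Suc n)
  then show ?case using less_exp[of n] by (simp; linarith)
qed simp

theorem no_left_total_effectively_optimal: "\<not> (\<exists>U. machine U \<and> left_total U \<and> effectively_optimal U)"
proof
  assume "\<exists>U. machine U \<and> left_total U \<and> effectively_optimal U"
  then obtain U where lt: "left_total U" and "effectively_optimal U" by blast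
  then obtain h c where "total_computable h" and hl: "\<And>x. length (h x) \<le> length x + c"
    and hU: "\<And>x. diagonal_machine x = U (h x)"
    using machine_diagonal_machine unfolding effectively_optimal_def by blast
  then obtain r where r: "\<And>z. eval r [z] (bcode (h (bdecode z)))"
    unfolding total_computable_def machine_def by (metis bcode_bdecode)
  define n where "n = 2 * npair (recf_code r) c + 2"
  define x where "x a = bdecode (level_code n a)" for a
  define G where "G a = bcode (h (x a))" for a
  have halts: "U (h (x a)) \<noteq> None \<longleftrightarrow>
      (\<exists>pq<2 ^ n * 2 ^ n. same_length_pair G n pq) \<and> a = diagonal_choice G n" if "a < 2 ^ n" for a
    using diagonal_halts_level_iff[OF r n_def that] diagonal_machine_halts_iff[of "x a"] hU[of "x a"]
    unfolding x_def G_def by simp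
  have "c \<le> npair (recf_code r) c" unfolding npair_def by (rule le_prod_encode_2)
  then have "Suc (n + c) < 2 * n" unfolding n_def by simp
  then have "Suc (n + c) < 2 ^ n" using double_le_power_two[of n] by linarith
  moreover have "blength (G a) \<le> n + c" if "a < 2 ^ n" for a
    using hl[of "x a"] length_bdecode_level[OF that] unfolding G_def x_def by simp
  ultimately have pair: "\<exists>pq<2 ^ n * 2 ^ n. same_length_pair G n pq"
    by (intro same_length_pair_exists)
  then obtain a where a: "a < 2 ^ n" "diagonal_choice G n < 2 ^ n" "a \<noteq> diagonal_choice G n"
    "length (h (x a)) = length (h (x (diagonal_choice G n)))" "rank (h (x a)) \<le> rank (h (x (diagonal_choice G n)))"
    by (rule diagonal_choice_pair) (simp_all add: G_def)
  have "U (h (x (diagonal_choice G n))) \<noteq> None" using halts[OF a(2)] pair by simp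
  then have "U (h (x a)) \<noteq> None"
    using lt a(4,5) lex_le_rank unfolding left_total_def by blast
  then show False using halts[OF a(1)] a(3) by simp
qed

lemma C_le_length: "V p = Some y \<Longrightarrow> C V y \<le> enat (length p)"
  unfolding C_def by (rule INF_lower) simp

lemma C_attained: "V p0 = Some y \<Longrightarrow> \<exists>p. V p = Some y \<and> C V y = enat (length p)"
proof -
  assume p0: "V p0 = Some y"
  define A where "A = (\<lambda>p. enat (length p)) ` {p. V p = Some y}"
  have ne: "A \<noteq> {}" using p0 unfolding A_def by auto
  have "C V y = Inf A" unfolding C_def A_def by simp
  also have "\<dots> = (LEAST x. x \<in> A)" using ne by (simp add: Inf_enat_def)
  finally have "C V y \<in> A" using ne by (auto intro: LeastI)
  then show ?thesis unfolding A_def by auto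
qed

lemma C_infinite: "(\<forall>p. V p \<noteq> Some y) \<Longrightarrow> C V y = \<infinity>"
  unfolding C_def by (simp add: top_enat_def[symmetric])

lemma C_le_if_simulates:
  assumes "\<forall>p. W p \<noteq> None \<longrightarrow> (\<exists>p'. length p' \<le> length p + k \<and> U p' = W p)"
  shows "C U y \<le> C W y + enat k"
proof (cases "\<exists>p. W p = Some y")
  case False
  then show ?thesis using C_infinite[of W y] by simp
next
  case True
  then obtain p0 where "W p0 = Some y" by blast
  then obtain p where p: "W p = Some y" "C W y = enat (length p)" using C_attained by metis
  then obtain p' where p': "length p' \<le> length p + k" "U p' = Some y" using assms by fastforce
  have "C U y \<le> enat (length p')" using C_le_length[of U p' y, OF p'(2)] .
  also have "\<dots> \<le> enat (length p + k)" using p'(1) by simp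
  also have "\<dots> = C W y + enat k" using p(2) by simp
  finally show ?thesis .
qed

section \<open>An optimal machine\<close>

text \<open>On input \<open>1\<^sup>e 0 x\<close> the universal machine runs the recursive function with code \<open>e\<close> on \<open>x\<close>;
  \<open>prefix_index z\<close> is the position of the first zero bit of the string coded by \<open>z\<close>.\<close>
definition zero_bit_at :: "nat \<Rightarrow> nat \<Rightarrow> bool" where
  "zero_bit_at z k \<longleftrightarrow> (btail ^^ k) z \<noteq> 0 \<and> bhead ((btail ^^ k) z) = 0"

definition prefix_index :: "nat \<Rightarrow> nat" where
  "prefix_index z = bounded_least z (zero_bit_at z)"

definition universal_halts :: "nat \<Rightarrow> nat \<Rightarrow> bool" where
  "universal_halts z w \<longleftrightarrow>
     (\<exists>k<z. zero_bit_at z k) \<and> certifies (prefix_index z) ((btail ^^ Suc (prefix_index z)) z) w"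

definition universal_value :: "nat \<Rightarrow> nat \<Rightarrow> nat" where
  "universal_value z w = certified_value (prefix_index z) ((btail ^^ Suc (prefix_index z)) z) w"

definition universal_machine :: "bool list \<Rightarrow> bool list option" where
  "universal_machine = search_machine universal_halts universal_value"

lemma decidable2_universal_halts: "decidable2 universal_halts"
  unfolding universal_halts_def prefix_index_def zero_bit_at_def
  by (intro computable_intros decidable_certifies computable_funpow_btail)

lemma computable2_universal_value: "computable2 universal_value"
  unfolding universal_value_def prefix_index_def zero_bit_at_def
  by (intro computable_intros computable_certified_value computable_funpow_btail)

lemma universal_prefix:
  fixes e :: nat and x :: "bool list"
  defines "z \<equiv> bcode (replicate e True @ False # x)"
  shows "(\<exists>k<z. zero_bit_at z k) \<and> prefix_index z = e \<and> (btail ^^ Suc e) z = bcode x"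
proof -
  have bits: "(btail ^^ k) z = bcode (drop k (replicate e True @ False # x))" for k
    unfolding z_def by (rule funpow_btail_bcode)
  have "drop k (replicate e True @ False # x) = True # replicate (e - Suc k) True @ False # x" if "k < e" for k
    using that by (simp add: drop_append) (metis Suc_diff_Suc replicate_Suc)
  then have before: "\<not> zero_bit_at z k" if "k < e" for k
    using that unfolding zero_bit_at_def bits by simp
  have at: "zero_bit_at z e" unfolding zero_bit_at_def bits by simp
  have "e < z" unfolding z_def using length_le_bcode[of "replicate e True @ False # x"] by simp
  moreover have "(LEAST k. zero_bit_at z k) = e"
    using at before by (intro Least_equality) (auto simp: not_less[symmetric])
  ultimately show ?thesis
    using at unfolding prefix_index_def bounded_least_def bits by auto
qed

lemma universal_machine_simulates:
  assumes "machine V"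
  shows "\<exists>e. \<forall>x. universal_machine (replicate e True @ False # x) = V x"
proof -
  obtain r where r: "\<And>x y. eval r [bcode x] y \<longleftrightarrow> (\<exists>z. V x = Some z \<and> y = bcode z)"
    using assms unfolding machine_def by blast
  have "universal_machine (replicate (recf_code r) True @ False # x) = V x" for x
  proof -
    let ?c = "certifies (recf_code r) (bcode x)"
    have *: "universal_machine (replicate (recf_code r) True @ False # x) =
        (if \<exists>w. ?c w then Some (bdecode (certified_value (recf_code r) (bcode x) (LEAST w. ?c w))) else None)"
      using universal_prefix[of "recf_code r" x]
      unfolding universal_machine_def search_machine_def universal_halts_def universal_value_def by simp
    show ?thesis
    proof (cases "V x")
      case None
      then have "\<not> ?c w" for w using certifies_sound[of r "bcode x" w] r[of x] by auto
      then show ?thesis using * None by simp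
    next
      case (Some v)
      then have "certified_value (recf_code r) (bcode x) (LEAST w. ?c w) = bcode v" "\<exists>w. ?c w"
        using eval_iff_certified[of r "bcode x" "bcode v"] r by simp_all
      then show ?thesis using * Some by simp
    qed
  qed
  then show ?thesis by blast
qed

lemma C_universal_machine:
  assumes "machine V"
  shows "\<exists>c. \<forall>y. C universal_machine y \<le> C V y + enat c"
proof -
  obtain e where e: "\<And>x. universal_machine (replicate e True @ False # x) = V x"
    using universal_machine_simulates[OF assms] by blast
  have "C universal_machine y \<le> C V y + enat (Suc e)" for y
  proof (rule C_le_if_simulates, intro allI impI)
    show "\<exists>p'. length p' \<le> length p + Suc e \<and> universal_machine p' = V p" for p
      using e by (intro exI[of _ "replicate e True @ False # p"]) simp
  qed
  then show ?thesis by blast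
qed

section \<open>Left-total normalisation\<close>

text \<open>The halting strings of length \<open>n\<close> are enumerated in the order of \<open>halt_key\<close>, i.e.\ by
  halting time and then by index; \<open>halt_rank\<close> is the position in this enumeration.\<close>

definition halts_within :: "(nat \<Rightarrow> nat \<Rightarrow> bool) \<Rightarrow> nat \<Rightarrow> nat \<Rightarrow> bool" where
  "halts_within P z s \<longleftrightarrow> (\<exists>w<s. P z w)"
definition halted_count :: "(nat \<Rightarrow> nat \<Rightarrow> bool) \<Rightarrow> nat \<Rightarrow> nat \<Rightarrow> nat" where
  "halted_count P n s = (\<Sum>a<2 ^ n. if halts_within P (level_code n a) s then 1 else 0)"
definition halt_key_within :: "(nat \<Rightarrow> nat \<Rightarrow> bool) \<Rightarrow> nat \<Rightarrow> nat \<Rightarrow> nat \<Rightarrow> nat" where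
  "halt_key_within P n s a = bounded_least s (P (level_code n a)) * 2 ^ n + a"
definition keys_below :: "(nat \<Rightarrow> nat \<Rightarrow> bool) \<Rightarrow> nat \<Rightarrow> nat \<Rightarrow> nat \<Rightarrow> nat" where
  "keys_below P n s a = (\<Sum>b<2 ^ n. if halts_within P (level_code n b) s \<and> halt_key_within P n s b < halt_key_within P n s a then 1 else 0)"
definition halted_select :: "(nat \<Rightarrow> nat \<Rightarrow> bool) \<Rightarrow> nat \<Rightarrow> nat \<Rightarrow> nat \<Rightarrow> nat" where
  "halted_select P n s i = bounded_least (2 ^ n) (\<lambda>a. halts_within P (level_code n a) s \<and> keys_below P n s a = i)"
definition left_total_halts :: "(nat \<Rightarrow> nat \<Rightarrow> bool) \<Rightarrow> nat \<Rightarrow> nat \<Rightarrow> bool" where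
  "left_total_halts P z s \<longleftrightarrow> brank z < halted_count P (blength z) s"
definition left_total_value :: "(nat \<Rightarrow> nat \<Rightarrow> bool) \<Rightarrow> (nat \<Rightarrow> nat \<Rightarrow> nat) \<Rightarrow> nat \<Rightarrow> nat \<Rightarrow> nat" where
  "left_total_value P F z s = F (level_code (blength z) (halted_select P (blength z) s (brank z)))
                  (bounded_least s (P (level_code (blength z) (halted_select P (blength z) s (brank z)))))"

lemma decidable_halts_within: assumes "decidable2 P" "computable z" "computable s" shows "decidable (\<lambda>x. halts_within P (z x) (s x))"
  unfolding halts_within_def
  by (intro computable_intros decidable2_app[OF assms(1)] assms computable_comp[OF assms(2)] computable_comp[OF assms(3)])

lemma computable_halted_count: assumes "decidable2 P" "computable n" "computable s" shows "computable (\<lambda>x. halted_count P (n x) (s x))"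
  unfolding halted_count_def
  by (intro computable_intros computable_sum decidable_halts_within[OF assms(1)] assms computable_comp[OF assms(2)] computable_comp[OF assms(3)])

lemma computable_halt_key_within: assumes "decidable2 P" "computable n" "computable s" "computable a" shows "computable (\<lambda>x. halt_key_within P (n x) (s x) (a x))"
  unfolding halt_key_within_def
  by (intro computable_intros decidable2_app[OF assms(1)] assms computable_comp[OF assms(2)] computable_comp[OF assms(3)] computable_comp[OF assms(4)])

lemma computable_keys_below: assumes "decidable2 P" "computable n" "computable s" "computable a" shows "computable (\<lambda>x. keys_below P (n x) (s x) (a x))"
  unfolding keys_below_def
  by (intro computable_intros computable_sum decidable_halts_within[OF assms(1)] computable_halt_key_within[OF assms(1)] assms computable_comp[OF assms(2)] computable_comp[OF assms(3)] computable_comp[OF assms(4)])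

lemma computable_halted_select: assumes "decidable2 P" "computable n" "computable s" "computable i" shows "computable (\<lambda>x. halted_select P (n x) (s x) (i x))"
  unfolding halted_select_def
  by (intro computable_intros computable_sum decidable_halts_within[OF assms(1)] computable_keys_below[OF assms(1)] assms computable_comp[OF assms(2)] computable_comp[OF assms(3)] computable_comp[OF assms(4)])

lemma decidable2_left_total_halts: assumes "decidable2 P" shows "decidable2 (left_total_halts P)"
  unfolding left_total_halts_def by (intro computable_intros computable_halted_count[OF assms])

lemma computable2_left_total_value: assumes "decidable2 P" "computable2 F" shows "computable2 (left_total_value P F)"
  unfolding left_total_value_def by (intro computable_intros computable2_app[OF assms(2)] computable_halted_select[OF assms(1)] computable_bounded_least decidable2_app[OF assms(1)])

definition level_dom :: "(nat \<Rightarrow> nat \<Rightarrow> bool) \<Rightarrow> nat \<Rightarrow> nat set" where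
  "level_dom P n = {a. a < 2 ^ n \<and> (\<exists>w. P (level_code n a) w)}"
definition halt_time :: "(nat \<Rightarrow> nat \<Rightarrow> bool) \<Rightarrow> nat \<Rightarrow> nat \<Rightarrow> nat" where
  "halt_time P n a = (LEAST w. P (level_code n a) w)"
definition halt_key :: "(nat \<Rightarrow> nat \<Rightarrow> bool) \<Rightarrow> nat \<Rightarrow> nat \<Rightarrow> nat" where
  "halt_key P n a = halt_time P n a * 2 ^ n + a"
definition halt_rank :: "(nat \<Rightarrow> nat \<Rightarrow> bool) \<Rightarrow> nat \<Rightarrow> nat \<Rightarrow> nat" where
  "halt_rank P n a = card {b \<in> level_dom P n. halt_key P n b < halt_key P n a}"

lemma level_dom_subset: "level_dom P n \<subseteq> {..<2 ^ n}" unfolding level_dom_def by auto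
lemma finite_level_dom: "finite (level_dom P n)" using level_dom_subset finite_subset by blast

lemma halts_within_iff: "a < 2 ^ n \<Longrightarrow> halts_within P (level_code n a) s \<longleftrightarrow> a \<in> level_dom P n \<and> halt_time P n a < s"
  unfolding halts_within_def level_dom_def halt_time_def
  by (auto intro: LeastI Least_le le_less_trans)

lemma bounded_least_halt_time: "a < 2 ^ n \<Longrightarrow> halts_within P (level_code n a) s \<Longrightarrow> bounded_least s (P (level_code n a)) = halt_time P n a"
  unfolding halts_within_def bounded_least_def halt_time_def by auto

lemma halted_count_eq: "halted_count P n s = card {a \<in> level_dom P n. halt_time P n a < s}"
proof -
  have "halted_count P n s = card {a. a < 2 ^ n \<and> halts_within P (level_code n a) s}"
    unfolding halted_count_def by (simp add: sum.If_cases Int_def)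
  also have "{a. a < 2 ^ n \<and> halts_within P (level_code n a) s} = {a \<in> level_dom P n. halt_time P n a < s}"
    using halts_within_iff[of _ n P s] level_dom_subset[of P n] by auto
  finally show ?thesis .
qed

lemma halted_count_le: "halted_count P n s \<le> card (level_dom P n)"
  unfolding halted_count_eq by (intro card_mono finite_level_dom) auto

lemma halted_count_eventually_full: "\<exists>s. halted_count P n s = card (level_dom P n)"
proof -
  have "\<exists>s. \<forall>a\<in>level_dom P n. halt_time P n a < s"
  proof -
    have "finite (halt_time P n ` level_dom P n)" using finite_level_dom by simp
    then obtain m where "\<forall>v\<in>halt_time P n ` level_dom P n. v \<le> m" using finite_nat_set_iff_bounded_le by blast
    then show ?thesis by (intro exI[of _ "Suc m"]) auto
  qed
  then obtain s where "\<forall>a\<in>level_dom P n. halt_time P n a < s" by blast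
  then have "{a \<in> level_dom P n. halt_time P n a < s} = level_dom P n" by auto
  then show ?thesis unfolding halted_count_eq by (intro exI[of _ s]) simp
qed

lemma halt_key_inj: "a < 2 ^ n \<Longrightarrow> b < 2 ^ n \<Longrightarrow> halt_key P n a = halt_key P n b \<Longrightarrow> a = b"
  unfolding halt_key_def by (metis mod_mult_self3 mod_less)

lemma halt_key_less_imp_le: "a < 2 ^ n \<Longrightarrow> b < 2 ^ n \<Longrightarrow> halt_key P n b < halt_key P n a \<Longrightarrow> halt_time P n b \<le> halt_time P n a"
proof (rule ccontr)
  assume a: "a < 2 ^ n" "b < 2 ^ n" "halt_key P n b < halt_key P n a" "\<not> halt_time P n b \<le> halt_time P n a"
  then have "Suc (halt_time P n a) \<le> halt_time P n b" by simp
  then have "Suc (halt_time P n a) * 2 ^ n \<le> halt_time P n b * 2 ^ n" by (rule mult_le_mono1)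
  then show False using a(1,3) unfolding halt_key_def by simp
qed

lemma halt_key_less: "a < 2 ^ n \<Longrightarrow> b < 2 ^ n \<Longrightarrow> halt_time P n b < halt_time P n a \<Longrightarrow> halt_key P n b < halt_key P n a"
proof -
  assume a: "a < 2 ^ n" "b < 2 ^ n" "halt_time P n b < halt_time P n a"
  then have "Suc (halt_time P n b) * 2 ^ n \<le> halt_time P n a * 2 ^ n" by (intro mult_le_mono1) simp
  then show ?thesis using a(2) unfolding halt_key_def by simp
qed

lemma bij_betw_halt_rank: "bij_betw (halt_rank P n) (level_dom P n) {..<card (level_dom P n)}"
proof -
  let ?D = "level_dom P n"
  have inj: "inj_on (halt_rank P n) ?D"
  proof (rule inj_onI)
    fix a b assume ab: "a \<in> ?D" "b \<in> ?D" "halt_rank P n a = halt_rank P n b"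
    show "a = b"
    proof (rule ccontr)
      assume "a \<noteq> b"
      then have "halt_key P n a \<noteq> halt_key P n b" using halt_key_inj ab level_dom_subset by blast
      then have "halt_key P n a < halt_key P n b \<or> halt_key P n b < halt_key P n a" by auto
      moreover have "halt_rank P n x < halt_rank P n y" if "x \<in> ?D" "y \<in> ?D" "halt_key P n x < halt_key P n y" for x y
      proof -
        have "{c \<in> ?D. halt_key P n c < halt_key P n x} \<subset> {c \<in> ?D. halt_key P n c < halt_key P n y}"
          using that by auto
        then show ?thesis unfolding halt_rank_def by (intro psubset_card_mono) (auto intro: finite_subset[OF _ finite_level_dom])
      qed
      ultimately show False using ab by fastforce
    qed
  qed
  have sub: "halt_rank P n ` ?D \<subseteq> {..<card ?D}"
  proof
    fix v assume "v \<in> halt_rank P n ` ?D"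
    then obtain a where a: "a \<in> ?D" "v = halt_rank P n a" by blast
    have "{c \<in> ?D. halt_key P n c < halt_key P n a} \<subset> ?D" using a(1) by auto
    then have "halt_rank P n a < card ?D" unfolding halt_rank_def by (intro psubset_card_mono finite_level_dom)
    then show "v \<in> {..<card ?D}" using a by simp
  qed
  have "card (halt_rank P n ` ?D) = card {..<card ?D}" using card_image[OF inj] by simp
  then have "halt_rank P n ` ?D = {..<card ?D}" using sub by (intro card_subset_eq) auto
  then show ?thesis using inj unfolding bij_betw_def by blast
qed

lemma keys_below_eq_halt_rank:
  assumes "a \<in> level_dom P n" "halt_time P n a < s"
  shows "keys_below P n s a = halt_rank P n a"
proof -
  have a: "a < 2 ^ n" using assms level_dom_subset by auto
  have ka: "halt_key_within P n s a = halt_key P n a" unfolding halt_key_within_def halt_key_def using bounded_least_halt_time[OF a] halts_within_iff[OF a] assms by simp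
  have "keys_below P n s a = card {b. b < 2 ^ n \<and> halts_within P (level_code n b) s \<and> halt_key_within P n s b < halt_key_within P n s a}"
    unfolding keys_below_def by (simp add: sum.If_cases Int_def)
  also have "{b. b < 2 ^ n \<and> halts_within P (level_code n b) s \<and> halt_key_within P n s b < halt_key_within P n s a} = {b \<in> level_dom P n. halt_key P n b < halt_key P n a}"
  proof (intro set_eqI iffI)
    fix b assume b: "b \<in> {b. b < 2 ^ n \<and> halts_within P (level_code n b) s \<and> halt_key_within P n s b < halt_key_within P n s a}"
    then have "halt_key_within P n s b = halt_key P n b" unfolding halt_key_within_def halt_key_def using bounded_least_halt_time by auto
    then show "b \<in> {b \<in> level_dom P n. halt_key P n b < halt_key P n a}" using b halts_within_iff ka by auto
  next
    fix b assume b: "b \<in> {b \<in> level_dom P n. halt_key P n b < halt_key P n a}"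
    then have b2: "b < 2 ^ n" using level_dom_subset by auto
    have "halt_time P n b \<le> halt_time P n a" using halt_key_less_imp_le[OF a b2] b by auto
    then have h: "halts_within P (level_code n b) s" using halts_within_iff[OF b2] b assms(2) by auto
    then have "halt_key_within P n s b = halt_key P n b" unfolding halt_key_within_def halt_key_def using bounded_least_halt_time[OF b2] by auto
    then show "b \<in> {b. b < 2 ^ n \<and> halts_within P (level_code n b) s \<and> halt_key_within P n s b < halt_key_within P n s a}"
      using b2 h b ka by auto
  qed
  finally show ?thesis unfolding halt_rank_def .
qed

lemma halted_select_at_rank:
  assumes i: "i < card (level_dom P n)" and a: "a \<in> level_dom P n" "halt_rank P n a = i"
  defines "T \<equiv> LEAST s. i < halted_count P n s"
  shows "halt_time P n a < T \<and> halted_select P n T i = a \<and> i < halted_count P n T"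
proof -
  have ex: "\<exists>s. i < halted_count P n s" using halted_count_eventually_full[of P n] i by metis
  then have iT: "i < halted_count P n T" unfolding T_def by (rule LeastI_ex)
  have a2: "a < 2 ^ n" using a level_dom_subset by auto
  have tT: "halt_time P n a < T"
  proof (rule ccontr)
    assume nt: "\<not> halt_time P n a < T"
    have "{b \<in> level_dom P n. halt_time P n b < T} \<subseteq> {b \<in> level_dom P n. halt_key P n b < halt_key P n a}"
    proof
      fix b assume b: "b \<in> {b \<in> level_dom P n. halt_time P n b < T}"
      then have b2: "b < 2 ^ n" using level_dom_subset by blast
      have "halt_time P n b < halt_time P n a" using b nt by simp
      then show "b \<in> {b \<in> level_dom P n. halt_key P n b < halt_key P n a}" using halt_key_less[OF a2 b2] b by simp
    qed
    then have "card {b \<in> level_dom P n. halt_time P n b < T} \<le> card {b \<in> level_dom P n. halt_key P n b < halt_key P n a}"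
      by (rule card_mono[rotated]) (rule finite_subset[OF _ finite_level_dom], blast)
    then have "halted_count P n T \<le> halt_rank P n a" unfolding halted_count_eq halt_rank_def .
    then show False using iT a(2) by simp
  qed
  have Pa: "halts_within P (level_code n a) T \<and> keys_below P n T a = i"
    using halts_within_iff[OF a2] a(1) tT keys_below_eq_halt_rank[OF a(1) tT] a(2) by simp
  have injr: "inj_on (halt_rank P n) (level_dom P n)" using bij_betw_halt_rank[of P n] by (rule bij_betw_imp_inj_on)
  have uniq: "b = a" if b2: "b < 2 ^ n" and pb: "halts_within P (level_code n b) T \<and> keys_below P n T b = i" for b
  proof -
    have bD: "b \<in> level_dom P n" "halt_time P n b < T" using halts_within_iff[OF b2] pb by auto
    then have "halt_rank P n b = halt_rank P n a" using keys_below_eq_halt_rank[OF bD] pb a(2) by simp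
    then show ?thesis using inj_onD[OF injr _ bD(1) a(1)] by simp
  qed
  have le: "a \<le> b" if pb: "halts_within P (level_code n b) T \<and> keys_below P n T b = i" for b
  proof (cases "b < 2 ^ n")
    case True then show ?thesis using uniq pb by simp
  next
    case False then show ?thesis using a2 by simp
  qed
  have L: "(LEAST b. halts_within P (level_code n b) T \<and> keys_below P n T b = i) = a"
    by (rule Least_equality) (use Pa le in auto)
  have "halted_select P n T i = a" unfolding halted_select_def bounded_least_def L using a2 Pa by auto
  then show ?thesis using tT iT by simp
qed

definition left_total_machine :: "(nat \<Rightarrow> nat \<Rightarrow> bool) \<Rightarrow> (nat \<Rightarrow> nat \<Rightarrow> nat) \<Rightarrow> bool list \<Rightarrow> bool list option" where
  "left_total_machine P F = search_machine (left_total_halts P) (left_total_value P F)"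

lemma machine_left_total_machine: "decidable2 P \<Longrightarrow> computable2 F \<Longrightarrow> machine (left_total_machine P F)"
  unfolding left_total_machine_def
  by (intro machine_search_machine decidable2_left_total_halts computable2_left_total_value)

lemma left_total_machine_None:
  assumes "card (level_dom P (length p)) \<le> rank p"
  shows "left_total_machine P F p = None"
proof -
  have "\<not> left_total_halts P (bcode p) s" for s
    unfolding left_total_halts_def using halted_count_le[of P "length p" s] assms by simp
  then show ?thesis unfolding left_total_machine_def search_machine_def by simp
qed

lemma left_total_machine_at_rank:
  assumes aD: "a \<in> level_dom P (length p)" and ra: "halt_rank P (length p) a = rank p"
  shows "left_total_machine P F p = search_machine P F (bdecode (level_code (length p) a))"
proof -
  define n where "n = length p"
  define i where "i = rank p"
  have aD': "a \<in> level_dom P n" and ra': "halt_rank P n a = i" using aD ra unfolding n_def i_def by auto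
  have i: "i < card (level_dom P n)" using bij_betw_halt_rank[of P n] aD' ra' unfolding bij_betw_def by auto
  define T where "T = (LEAST s. i < halted_count P n s)"
  have T: "halt_time P n a < T" "halted_select P n T i = a" "i < halted_count P n T"
    using halted_select_at_rank[OF i aD' ra'] unfolding T_def by auto
  have a: "a < 2 ^ n" using aD' level_dom_subset by auto
  have halts: "left_total_halts P (bcode p) s \<longleftrightarrow> i < halted_count P n s" for s
    unfolding left_total_halts_def n_def i_def by simp
  have "halts_within P (level_code n a) T" using halts_within_iff[OF a] aD' T(1) by simp
  then have "left_total_value P F (bcode p) T = F (level_code n a) (halt_time P n a)"
    unfolding left_total_value_def using T(2) bounded_least_halt_time[OF a] by (simp add: n_def i_def)
  moreover have "\<exists>w. P (level_code n a) w" using aD' unfolding level_dom_def by simp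
  ultimately show ?thesis
    using T(3) unfolding left_total_machine_def search_machine_def halts T_def[symmetric] n_def[symmetric]
    by (auto simp: halt_time_def)
qed

lemma left_total_left_total_machine: "left_total (left_total_machine P F)"
  unfolding left_total_def
proof (intro allI impI)
  fix n x y
  assume h: "length x = n \<and> length y = n \<and> left_total_machine P F y \<noteq> None \<and> lex_le x y"
  then have "rank y < card (level_dom P n)"
    using left_total_machine_None[of P y F] by (cases "card (level_dom P n) \<le> rank y") auto
  moreover have "rank x \<le> rank y" using h lex_le_rank by auto
  ultimately have "rank x < card (level_dom P n)" by simp
  then obtain a where a: "a \<in> level_dom P n" "halt_rank P n a = rank x"
    using bij_betw_halt_rank[of P n] unfolding bij_betw_def by (metis imageE lessThan_iff)
  then have "\<exists>w. P (level_code n a) w" unfolding level_dom_def by simp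
  then show "left_total_machine P F x \<noteq> None"
    using left_total_machine_at_rank[of a P x F] a h by (simp add: search_machine_def)
qed

lemma left_total_machine_simulates:
  assumes "search_machine P F q \<noteq> None"
  shows "\<exists>p. length p = length q \<and> left_total_machine P F p = search_machine P F q"
proof -
  define n where "n = length q"
  obtain a where a: "a < 2 ^ n" "bcode q = level_code n a"
    using bcode_level_code[of q] unfolding n_def by blast
  then have aD: "a \<in> level_dom P n"
    using assms unfolding level_dom_def search_machine_def by (auto split: if_splits)
  have "halt_rank P n a < card (level_dom P n)"
    using bij_betw_halt_rank[of P n] aD unfolding bij_betw_def by auto
  also have "\<dots> \<le> 2 ^ n" using card_mono[OF _ level_dom_subset[of P n]] by simp
  finally obtain p where p: "length p = n" "rank p = halt_rank P n a" using rank_surj by blast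
  then have "left_total_machine P F p = search_machine P F (bdecode (level_code n a))"
    using left_total_machine_at_rank[of a P p F] aD by simp
  also have "\<dots> = search_machine P F q" unfolding a(2)[symmetric] by simp
  finally show ?thesis using p(1) n_def by blast
qed

theorem left_total_optimal_machine_exists: "\<exists>U. machine U \<and> left_total U \<and> optimal U"
proof (intro exI conjI)
  let ?U = "left_total_machine universal_halts universal_value"
  show "machine ?U"
    by (rule machine_left_total_machine[OF decidable2_universal_halts computable2_universal_value])
  show "left_total ?U" by (rule left_total_left_total_machine)
  have "C ?U y \<le> C universal_machine y + enat 0" for y
    unfolding universal_machine_def
  proof (rule C_le_if_simulates, intro allI impI)
    fix q assume "search_machine universal_halts universal_value q \<noteq> None"
    from left_total_machine_simulates[OF this]
    obtain p where "length p = length q" "?U p = search_machine universal_halts universal_value q"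
      by blast
    then show "\<exists>p. length p \<le> length q + 0 \<and> ?U p = search_machine universal_halts universal_value q"
      by (intro exI[of _ p]) simp
  qed
  then have le: "C ?U y \<le> C universal_machine y" for y by (simp add: zero_enat_def[symmetric])
  show "optimal ?U" unfolding optimal_def
  proof (intro allI impI)
    fix V assume "machine V"
    then obtain c where "\<forall>y. C universal_machine y \<le> C V y + enat c"
      using C_universal_machine by blast
    then have "C ?U y \<le> C V y + enat c" for y using le[of y] by (blast intro: order.trans)
    then show "\<exists>c. \<forall>y. C ?U y \<le> C V y + enat c" by blast
  qed
qed

theorem proposition2p7:
  shows "(\<exists>U. machine U \<and> left_total U \<and> optimal U)
         \<and> \<not> (\<exists>U. machine U \<and> left_total U \<and> effectively_optimal U)"
  using left_total_optimal_machine_exists no_left_total_effectively_optimal by blast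

end
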